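(* Let $m\ge 1$ be an integer. For every integer $N\ge 0$ let $H_N=\det\left(\gamma^{(2m)}_{i+j-m}(t)\right)_{i,j=0}^{N-1}$ (with $H_0=1$). Then $$H_N=\begin{cases}1, & \text{if } N=0,\\ -\xi_1\, t^{m(n-1)(mn-2)/2}\,[n-1]_{t^m}, & \text{if } N=mn \text{ with } n\ge 1,\\ (-1)^m\xi_1\, t^{m^2n(n-1)/2}\,[n]_{t^m}, & \text{if } N=mn+1 \text{ with } n\ge 0,\\ 0, & \text{otherwise},\end{cases}$$ where $\xi_1=(-1)^{nm(m-1)/2}$.
   Context: The Narayana polynomials are $\gamma_n(t)=\sum_{k=0}^{n}\binom{n}{k}\binom{n-1}{k}\frac{1}{k+1}t^k$ (so $\gamma_0(t)=1$), with generating function $\gamma(t,q)=\sum_{n\ge0}\gamma_n(t)q^n$, which satisfies $-1+(1-q+tq)\gamma(t,q)-tq\,\gamma(t,q)^2=0$. Let $G(t,q)=(\gamma(t,q)-1)/q$. For $m\ge1$ the polynomials $\gamma^{(2m)}_n(t)$ are defined by $\sum_{n\ge0}\gamma^{(2m)}_n(t)q^n=G(t,q)^m$, and $\gamma^{(2m)}_i(t)=0$ for $i<0$. Equivalently, $\gamma^{(2m)}_{n-m}(t)$ is the coefficient of $q^n$ in $(\gamma(t,q)-1)^m$. The $q$-number is $[n]_x=1+x+\cdots+x^{n-1}$ (so $[0]_x=0$). *)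

theory Defs
  imports "HOL-Computational_Algebra.Formal_Power_Series" "HOL-Computational_Algebra.Polynomial"
    "Jordan_Normal_Form.Determinant"
begin

definition tvar :: "rat poly" where "tvar = [:0, 1:]"

text \<open>Narayana polynomial: sum over k=0..n of C(n,k) C(n-1,k)/(k+1) t^k.
  For n = 0 this gives 1 (nat subtraction 0-1 = 0 and C(0,0)=1, C(0,k)=0 for k>0).\<close>
definition narayana :: "nat \<Rightarrow> rat poly" where
  "narayana n = (\<Sum>k=0..n. smult (of_nat (n choose k) * of_nat ((n - 1) choose k) / of_nat (k + 1))
                               (tvar ^ k))"

definition gamma_fps :: "rat poly fps" where
  "gamma_fps = Abs_fps narayana"

definition G_fps :: "rat poly fps" where
  "G_fps = fps_shift 1 (gamma_fps - 1)"

definition gamma2m :: "nat \<Rightarrow> int \<Rightarrow> rat poly" where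
  "gamma2m m i = (if i < 0 then 0 else fps_nth (G_fps ^ m) (nat i))"

definition hankelH :: "nat \<Rightarrow> nat \<Rightarrow> rat poly" where
  "hankelH m N = det (mat N N (\<lambda>(i, j). gamma2m m (int i + int j - int m)))"

definition qnum :: "nat \<Rightarrow> 'a::comm_semiring_1 \<Rightarrow> 'a" where
  "qnum n x = (\<Sum>i<n. x ^ i)"

end

theory Submission
  imports Defs
begin

text \<open>With \<open>U = \<gamma> - 1\<close>, the quadratic equation for \<open>\<gamma>\<close> becomes \<open>U = q (1 + U) (1 + t U)\<close>;
  it follows from the three-term recurrence of the Narayana polynomials, which amounts to a
  linear ODE for \<open>2tq\<gamma> - 1 - (t - 1)q\<close> that the square root of the discriminant also satisfies.
  The Riordan array \<open>R\<^sub>i\<^sub>k = [q\<^sup>i] U\<^sup>k\<close> is unitriangular, and the Hankel matrix factors as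
  \<open>R C R\<^sup>T\<close>, where row \<open>k\<close> of \<open>C\<close> has the explicit generating function \<open>rho m k\<close>; hence
  \<open>H\<^sub>N = det C\<close>. Multiplying \<open>C\<close> by the unitriangular Toeplitz matrix of \<open>1 / rho m m\<close>
  turns the rows \<open>k \<ge> m\<close> into shifted monomials \<open>(tx)\<^sup>k\<^sup>-\<^sup>m\<close>, which leaves an \<open>m \<times> m\<close>
  determinant. Its entries are, up to powers of \<open>t\<close>, periodic in the column index with period
  \<open>2m\<close>, so depending on \<open>N\<close> modulo \<open>m\<close> and the parity of \<open>N div m\<close> it is triangular,
  antitriangular, or has a zero row.\<close>

section \<open>The functional equation of the Narayana generating function\<close>

definition narayana_number :: "nat \<Rightarrow> nat \<Rightarrow> rat" where
  "narayana_number n k = of_nat (n choose k) * of_nat ((n - 1) choose k) / of_nat (k + 1)"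

lemma tvar_power: "tvar ^ k = monom 1 k"
  by (simp add: tvar_def monom_altdef)

lemma narayana_number_eq_0: "0 < n \<Longrightarrow> n \<le> k \<Longrightarrow> narayana_number n k = 0"
  unfolding narayana_number_def by (subgoal_tac "n - 1 < k") auto

lemma narayana_number_0: "0 < n \<Longrightarrow> narayana_number n 0 = 1"
  by (simp add: narayana_number_def)

lemma narayana_number_1: "narayana_number n (Suc 0) = of_nat n * (of_nat n - 1) / 2"
  by (cases n) (simp_all add: narayana_number_def)

lemma tvar_mult: "tvar * p = pCons 0 p"
  by (simp add: tvar_def)

lemma coeff_narayana: "coeff (narayana n) k = narayana_number n k"
proof -
  have "narayana n = (\<Sum>i=0..n. monom (narayana_number n i) i)"
    unfolding narayana_def narayana_number_def tvar_power by (simp add: smult_monom)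
  then show ?thesis
    by (cases "k \<le> n") (simp_all add: coeff_sum narayana_number_def)
qed

lemma narayana_number_Suc_Suc:
  "narayana_number (Suc n) (Suc k) * (of_nat (Suc k) * of_nat (Suc k + 1))
     = of_nat (Suc n) * of_nat n * narayana_number n k"
proof -
  have e1: "of_nat (Suc k) * of_nat (Suc n choose Suc k) = (of_nat (Suc n) * of_nat (n choose k) :: rat)"
    by (simp only: of_nat_mult[symmetric] Suc_times_binomial)
  have e2: "of_nat (Suc k) * of_nat (n choose Suc k) = (of_nat n * of_nat ((n - 1) choose k) :: rat)"
    by (simp only: of_nat_mult[symmetric] binomial_absorption)
  have "narayana_number (Suc n) (Suc k) * (of_nat (Suc k) * of_nat (Suc k + 1)) * of_nat (Suc k)
      = (of_nat (Suc k) * of_nat (Suc n choose Suc k)) * (of_nat (Suc k) * of_nat (n choose Suc k))"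
    unfolding narayana_number_def by (simp add: field_simps)
  also have "\<dots> = of_nat (Suc n) * of_nat n * narayana_number n k * of_nat (Suc k)"
    unfolding e1 e2 narayana_number_def by (simp add: field_simps)
  finally show ?thesis by simp
qed

lemma narayana_number_Suc_right:
  "narayana_number n (Suc k) * (of_nat (Suc k) * of_nat (Suc k + 1))
     = of_nat (n - k) * of_nat (n - 1 - k) * narayana_number n k"
proof -
  have e1: "of_nat (Suc k) * of_nat (n choose Suc k) = (of_nat (n - k) * of_nat (n choose k) :: rat)"
    by (simp only: of_nat_mult[symmetric] binomial_absorption binomial_absorb_comp)
  have e2: "of_nat (Suc k) * of_nat ((n - 1) choose Suc k)
      = (of_nat (n - 1 - k) * of_nat ((n - 1) choose k) :: rat)"
    by (simp only: of_nat_mult[symmetric] binomial_absorption binomial_absorb_comp)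
  have "narayana_number n (Suc k) * (of_nat (Suc k) * of_nat (Suc k + 1)) * of_nat (Suc k)
     = (of_nat (Suc k) * of_nat (n choose Suc k)) * (of_nat (Suc k) * of_nat ((n - 1) choose Suc k))"
    unfolding narayana_number_def by (simp add: field_simps)
  also have "\<dots> = of_nat (n - k) * of_nat (n - 1 - k) * narayana_number n k * of_nat (Suc k)"
    unfolding e1 e2 narayana_number_def by (simp add: field_simps)
  finally show ?thesis by simp
qed

text \<open>All five Narayana numbers occurring in the recurrence are rational multiples of
  \<open>b = N(i+j+1, i)\<close>; clearing the denominators turns it into a polynomial identity.\<close>

lemma narayana_number_recurrence_interior:
  fixes i j :: nat
  shows "of_nat (i+j+4) * narayana_number (i+j+3) (i+2)
     - (2 * of_nat (i+j+3) - 1) * (narayana_number (i+j+2) (i+2) + narayana_number (i+j+2) (i+1))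
     + of_nat (i+j+1) * (narayana_number (i+j+1) (i+2) - 2 * narayana_number (i+j+1) (i+1)
                         + narayana_number (i+j+1) i) = 0"
proof -
  define b where "b = narayana_number (i+j+1) i"
  define x1 where "x1 = narayana_number (i+j+3) (i+2)"
  define x2 where "x2 = narayana_number (i+j+2) (i+1)"
  define x3 where "x3 = narayana_number (i+j+1) (i+1)"
  define x4 where "x4 = narayana_number (i+j+1) (i+2)"
  define x5 where "x5 = narayana_number (i+j+2) (i+2)"
  define D1 where "D1 = (of_nat (i+1) * of_nat (i+2) :: rat)"
  define D2 where "D2 = (of_nat (i+2) * of_nat (i+3) :: rat)"
  define c where "c = (2 * of_nat (i+j+3) - 1 :: rat)"
  have H1: "x1 * D2 = of_nat (i+j+3) * of_nat (i+j+2) * x2"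
    using narayana_number_Suc_Suc[of "i+j+2" "i+1"]
    unfolding x1_def x2_def D2_def by (simp add: eval_nat_numeral ac_simps)
  have H2: "x2 * D1 = of_nat (i+j+2) * of_nat (i+j+1) * b"
    using narayana_number_Suc_Suc[of "i+j+1" i]
    unfolding x2_def b_def D1_def by (simp add: eval_nat_numeral ac_simps)
  have H3: "x3 * D1 = of_nat (j+1) * of_nat j * b"
    using narayana_number_Suc_right[of "i+j+1" i]
    unfolding x3_def b_def D1_def by (simp add: eval_nat_numeral ac_simps)
  have H4: "x4 * D2 = of_nat j * (of_nat j - 1) * x3"
    using narayana_number_Suc_right[of "i+j+1" "i+1"]
    unfolding x4_def x3_def D2_def by (cases j) (simp_all add: eval_nat_numeral ac_simps)
  have H5: "x5 * D2 = of_nat (j+1) * of_nat j * x2"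
    using narayana_number_Suc_right[of "i+j+2" "i+1"]
    unfolding x5_def x2_def D2_def by (simp add: eval_nat_numeral ac_simps)
  let ?G = "of_nat (i+j+4) * x1 - c * (x5 + x2)
    + of_nat (i+j+1) * (x4 - 2 * x3 + b)"
  have "?G * (D1 * D2) = of_nat (i+j+4) * (x1 * D2) * D1
      - c * ((x5 * D2) * D1 + (x2 * D1) * D2)
      + of_nat (i+j+1) * ((x4 * D2) * D1 - 2 * (x3 * D1) * D2 + b * D1 * D2)"
    by (simp add: algebra_simps)
  also have "\<dots> = of_nat (i+j+4) * (of_nat (i+j+3) * of_nat (i+j+2)) * (x2 * D1)
      - c * ((of_nat (j+1) * of_nat j) * (x2 * D1) + (x2 * D1) * D2)
      + of_nat (i+j+1) * ((of_nat j * (of_nat j - 1)) * (x3 * D1) - 2 * (x3 * D1) * D2 + b * D1 * D2)"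
    unfolding H1 H4 H5 by (simp add: algebra_simps)
  also have "\<dots> = 0"
    unfolding H2 H3 unfolding c_def D1_def D2_def by (simp add: algebra_simps)
  finally have "?G * (D1 * D2) = 0" .
  moreover have "D1 * D2 \<noteq> 0" unfolding D1_def D2_def by simp
  ultimately show ?thesis unfolding c_def x1_def x2_def x3_def x4_def x5_def b_def by simp
qed

lemma narayana_number_recurrence:
  assumes "n \<ge> 3"
  shows "of_nat (n+1) * narayana_number n k
     - of_nat (2*n-1) * (narayana_number (n-1) k + (if k = 0 then 0 else narayana_number (n-1) (k-1)))
     + of_nat (n-2) * (narayana_number (n-2) k - 2 * (if k = 0 then 0 else narayana_number (n-2) (k-1))
                       + (if k < 2 then 0 else narayana_number (n-2) (k-2))) = 0"
proof -
  obtain p where n: "n = p + 3" using assms by (intro that[of "n - 3"]) simp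
  consider "k = 0" | "k = 1" | "2 \<le> k \<and> k < n" | "n \<le> k" by linarith
  then show ?thesis
  proof cases
    case 1
    then show ?thesis unfolding n by (simp add: narayana_number_0 algebra_simps)
  next
    case 2
    then show ?thesis unfolding n by (simp add: narayana_number_0 narayana_number_1 field_simps)
  next
    case 3
    then obtain i j where k: "k = i + 2" and nn: "n = i + j + 3"
      by (intro that[of "k - 2" "n - k - 1"]) linarith+
    have "of_nat (n+1) = (of_nat (i+j+4) :: rat)" "of_nat (n-2) = (of_nat (i+j+1) :: rat)"
      "of_nat (2*n-1) = (2 * of_nat (i+j+3) - 1 :: rat)"
      unfolding nn by simp_all
    moreover have "narayana_number n k = narayana_number (i+j+3) (i+2)"
      "narayana_number (n-1) k = narayana_number (i+j+2) (i+2)"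
      "narayana_number (n-1) (k-1) = narayana_number (i+j+2) (i+1)"
      "narayana_number (n-2) k = narayana_number (i+j+1) (i+2)"
      "narayana_number (n-2) (k-1) = narayana_number (i+j+1) (i+1)"
      "narayana_number (n-2) (k-2) = narayana_number (i+j+1) i"
      unfolding nn k by simp_all
    moreover have "k \<noteq> 0" "\<not> k < 2" unfolding k by simp_all
    ultimately show ?thesis using narayana_number_recurrence_interior[of i j] by (simp add: algebra_simps)
  next
    case 4
    then show ?thesis using assms by (simp add: narayana_number_eq_0)
  qed
qed

lemma narayana_recurrence:
  assumes "n \<ge> 3"
  shows "of_nat (n+1) * narayana n - of_nat (2*n-1) * ((1 + tvar) * narayana (n-1))
     + of_nat (n-2) * ((1 - tvar)^2 * narayana (n-2)) = 0"
proof (rule poly_eqI)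
  fix k
  have t: "(1 + tvar) * p = p + pCons 0 p" "(1 - tvar)^2 * p = p - 2 * pCons 0 p + pCons 0 (pCons 0 p)"
    for p :: "rat poly"
    by (simp_all add: power2_eq_square algebra_simps tvar_mult)
  have two: "coeff (2 * p) j = 2 * coeff p j" for p :: "rat poly" and j
    using of_nat_mult_conv_smult[of 2 p] by simp
  show "coeff (of_nat (n+1) * narayana n - of_nat (2*n-1) * ((1 + tvar) * narayana (n-1))
     + of_nat (n-2) * ((1 - tvar)^2 * narayana (n-2))) k = coeff 0 k"
    unfolding t of_nat_mult_conv_smult
    using narayana_number_recurrence[OF assms, of k]
    by (cases k; cases "k - 1") (simp_all add: coeff_narayana coeff_pCons' two)
qed

definition fps_t :: "rat poly fps" where "fps_t = fps_const tvar"

definition U_fps :: "rat poly fps" where "U_fps = gamma_fps - 1"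

lemma U_fps_nth: "fps_nth U_fps n = (if n = 0 then 0 else narayana n)"
proof -
  have "narayana 0 = 1" unfolding narayana_def by simp
  then show ?thesis unfolding U_fps_def gamma_fps_def by simp
qed

lemma U_fps_nth_0 [simp]: "fps_nth U_fps 0 = 0"
  by (simp add: U_fps_nth)

lemma U_fps_eq_X_mult_G: "U_fps = fps_X * G_fps"
proof (rule fps_ext)
  fix n show "fps_nth U_fps n = fps_nth (fps_X * G_fps) n"
    unfolding G_fps_def U_fps_def[symmetric] by (cases n) simp_all
qed

lemma narayana_1: "narayana (Suc 0) = 1"
  unfolding narayana_def by simp

lemma narayana_2: "narayana 2 = 1 + tvar"
  unfolding narayana_def by (simp add: numeral_2_eq_2)

lemma fps_nth_quadratic_mult:
  "fps_nth ((fps_const a + fps_const b * fps_X + fps_const c * fps_X^2) * F) n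
     = a * fps_nth F n + (if n = 0 then 0 else b * fps_nth F (n-1))
       + (if n < 2 then 0 else c * fps_nth F (n-2))"
proof -
  have "(fps_const a + fps_const b * fps_X + fps_const c * fps_X^2) * F
     = fps_const a * F + fps_const b * (fps_X * F) + fps_const c * (fps_X^2 * F)"
    by (simp add: algebra_simps)
  then show ?thesis by (simp add: fps_X_power_mult_nth)
qed

text \<open>\<open>disc\<close> is the discriminant of the quadratic equation for \<open>\<gamma>\<close>, and that equation says
  \<open>disc_root\<^sup>2 = disc\<close>.\<close>

definition disc :: "rat poly fps" where
  "disc = fps_const 1 + fps_const (-2 * (1 + tvar)) * fps_X + fps_const ((1 - tvar)^2) * fps_X^2"

definition disc_root :: "rat poly fps" where
  "disc_root = fps_const (2 * tvar) * (fps_X * U_fps) + fps_const (1 + tvar) * fps_X - 1"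

lemma disc_root_nth:
  "fps_nth disc_root n
     = (if n = 0 then -1 else if n = 1 then 1 + tvar else 2 * tvar * narayana (n - 1))"
  unfolding disc_root_def by (auto simp: U_fps_nth)

lemma fps_deriv_disc:
  "fps_deriv disc = fps_const (-2 * (1 + tvar)) + fps_const (2 * (1 - tvar)^2) * fps_X
     + fps_const 0 * fps_X^2"
  by (rule fps_ext) (simp add: disc_def)

lemma disc_root_ode: "2 * (disc * fps_deriv disc_root) = fps_deriv disc * disc_root"
proof (rule fps_ext)
  fix n
  have two: "fps_nth (2 * f) n = 2 * fps_nth f n" for f :: "rat poly fps"
    by (metis fps_mult_left_const_nth numeral_fps_const)
  consider "n = 0" | "n = 1" | "n = 2" | "n \<ge> 3" by linarith
  then show "fps_nth (2 * (disc * fps_deriv disc_root)) n = fps_nth (fps_deriv disc * disc_root) n"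
  proof cases
    case 1
    then show ?thesis
      unfolding two fps_deriv_disc unfolding disc_def fps_nth_quadratic_mult by (simp add: disc_root_nth)
  next
    case 2
    then show ?thesis
      unfolding two fps_deriv_disc unfolding disc_def fps_nth_quadratic_mult
      by (simp add: disc_root_nth narayana_1 numeral_fps_const) (simp add: algebra_simps power2_eq_square)
  next
    case 3
    then show ?thesis
      unfolding two fps_deriv_disc unfolding disc_def fps_nth_quadratic_mult
      by (simp add: disc_root_nth narayana_1 narayana_2[unfolded numeral_2_eq_2] numeral_fps_const
          eval_nat_numeral algebra_simps power2_eq_square)
  next
    case 4
    then obtain p where p: "n = p + 3" by (metis add.commute le_Suc_ex)
    define E where "E = of_nat p * narayana (p+3) + 4 * narayana (p+3)
      - (2 * of_nat p + 5) * ((1 + tvar) * narayana (p+2)) + (of_nat p + 1) * ((1 - tvar)^2 * narayana (p+1))"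
    have "of_nat (2*(p+3)-1) = (2 * of_nat p + 5 :: rat poly)"
      by simp
    then have "E = 0"
      using narayana_recurrence[of "p+3"] unfolding E_def by (simp add: algebra_simps eval_nat_numeral)
    moreover have "2 * fps_nth (disc * fps_deriv disc_root) n - fps_nth (fps_deriv disc * disc_root) n
        = 4 * tvar * E"
      unfolding fps_deriv_disc unfolding disc_def fps_nth_quadratic_mult p E_def
      by (simp add: disc_root_nth eval_nat_numeral algebra_simps power2_eq_square)
    ultimately show ?thesis unfolding two by simp
  qed
qed

lemma fps_ode_zero_unique:
  fixes f D E :: "'a::{idom, ring_char_0} fps"
  assumes ode: "D * fps_deriv f = E * f" and "fps_nth D 0 \<noteq> 0" and "fps_nth f 0 = 0"
  shows "f = 0"
proof (rule ccontr)
  assume "f \<noteq> 0"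
  then obtain j where j: "subdegree f = Suc j"
    using assms(3) by (metis nth_subdegree_nonzero not0_implies_Suc)
  have fj: "fps_nth f (Suc j) \<noteq> 0" using \<open>f \<noteq> 0\<close> j by (metis nth_subdegree_nonzero)
  have "subdegree (fps_deriv f) = j"
  proof (rule subdegreeI)
    show "fps_nth (fps_deriv f) j \<noteq> 0" using fj by (simp del: of_nat_Suc)
    show "fps_nth (fps_deriv f) i = 0" if "i < j" for i
      using that j by (simp add: nth_less_subdegree_zero)
  qed
  then have "fps_nth (D * fps_deriv f) j = fps_nth D 0 * fps_nth (fps_deriv f) j"
    using nth_subdegree_mult_right[of D "fps_deriv f"] by simp
  then have "fps_nth (D * fps_deriv f) j \<noteq> 0"
    using assms(2) fj by (simp del: of_nat_Suc)
  moreover have "fps_nth (E * f) j = 0"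
    using j by (intro fps_mult_nth_outside_subdegrees(2)) simp
  ultimately show False using ode by simp
qed

lemma disc_root_squared: "disc_root^2 = disc"
proof -
  have "disc * fps_deriv (disc_root^2 - disc) = fps_deriv disc * (disc_root^2 - disc)"
  proof -
    have "disc * fps_deriv (disc_root^2 - disc)
        = disc_root * (2 * (disc * fps_deriv disc_root)) - disc * fps_deriv disc"
      by (simp add: power2_eq_square algebra_simps)
    also have "\<dots> = fps_deriv disc * (disc_root^2 - disc)"
      unfolding disc_root_ode by (simp add: power2_eq_square algebra_simps)
    finally show ?thesis .
  qed
  moreover have "fps_nth disc 0 = 1"
    unfolding disc_def by simp
  moreover from this have "fps_nth (disc_root^2 - disc) 0 = 0"
    by (simp add: disc_root_nth power2_eq_square)
  ultimately have "disc_root^2 - disc = 0"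
    by (intro fps_ode_zero_unique[of disc _ "fps_deriv disc"]) simp_all
  then show ?thesis by simp
qed

lemma U_fps_functional_eq: "U_fps = fps_X * (1 + U_fps) * (1 + fps_t * U_fps)"
proof -
  have "1 - fps_t = fps_const (1 - tvar)"
    by (simp add: fps_t_def fps_eq_iff)
  then have "fps_const ((1 - tvar)^2) = (1 - fps_t)^2"
    by (simp only: fps_const_power)
  moreover have "fps_const (2 * tvar) = 2 * fps_t" "fps_const (1 + tvar) = 1 + fps_t"
    "fps_const (-2 * (1 + tvar)) = -2 * (1 + fps_t)"
    by (simp_all add: fps_t_def fps_eq_iff numeral_fps_const)
  ultimately have const_eqs: "fps_const (2 * tvar) = 2 * fps_t" "fps_const (1 + tvar) = 1 + fps_t"
    "fps_const (-2 * (1 + tvar)) = -2 * (1 + fps_t)" "fps_const ((1 - tvar)^2) = (1 - fps_t)^2"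
    by simp_all
  have root_eq: "disc_root = 2 * fps_t * fps_X * U_fps + (1 + fps_t) * fps_X - 1"
    unfolding disc_root_def const_eqs by (simp add: algebra_simps)
  have disc_eq: "disc = 1 - 2 * (1 + fps_t) * fps_X + (1 - fps_t)^2 * fps_X^2"
    unfolding disc_def const_eqs by (simp add: algebra_simps)
  have ring: "(2*x*X*u + (1+x)*X - 1)^2 - (1 - 2*(1+x)*X + (1-x)^2*X^2)
      = 4*x*X*(X*(1+u)*(1+x*u) - u)" for x X u :: "rat poly fps"
    by (simp add: power2_eq_square algebra_simps)
  have "4 * fps_t * fps_X * (fps_X * (1 + U_fps) * (1 + fps_t * U_fps) - U_fps) = disc_root^2 - disc"
    unfolding root_eq disc_eq by (rule ring[symmetric])
  also have "\<dots> = 0"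
    using disc_root_squared by simp
  finally have "4 * fps_t * fps_X * (fps_X * (1 + U_fps) * (1 + fps_t * U_fps) - U_fps) = 0" .
  moreover have "4 * fps_t * fps_X \<noteq> 0"
    by (simp add: fps_t_def numeral_fps_const tvar_def)
  ultimately show ?thesis by simp
qed

section \<open>Determinants of sparse matrices\<close>

lemma det_upper_triangular':
  fixes A :: "'a::comm_ring_1 mat"
  assumes A: "A \<in> carrier_mat n n" and zero: "\<And>i j. i < n \<Longrightarrow> j < i \<Longrightarrow> A $$ (i,j) = 0"
  shows "det A = (\<Prod>i<n. A $$ (i,i))"
proof -
  have "upper_triangular A" unfolding upper_triangular_def using A zero by auto
  from det_upper_triangular[OF this A] show ?thesis
    unfolding prod_list_diag_prod using A by (simp add: atLeast0LessThan)
qed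

lemma det_zero_row:
  fixes A :: "'a::comm_ring_1 mat"
  assumes A: "A \<in> carrier_mat n n" and k: "k < n" and zero: "\<And>j. j < n \<Longrightarrow> A $$ (k,j) = 0"
  shows "det A = 0"
proof -
  have "(\<Prod>i = 0..<n. A $$ (i, p i)) = 0" if p: "p permutes {0..<n}" for p
  proof -
    have "p k < n" using p k by (simp add: permutes_in_image)
    then have "A $$ (k, p k) = 0" using zero by simp
    then show ?thesis using k by (intro prod_zero) auto
  qed
  then show ?thesis unfolding det_def'[OF A] by simp
qed

definition antidiag_mat :: "nat \<Rightarrow> (nat \<Rightarrow> 'a::zero) \<Rightarrow> 'a mat" where
  "antidiag_mat n f = mat n n (\<lambda>(i,j). if i + j = n - 1 then f i else 0)"

lemma det_antidiag_mat:
  "det (antidiag_mat n f) = (-1)^(n * (n - 1) div 2) * (\<Prod>i<n. f i :: 'a::comm_ring_1)"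
proof (induction n arbitrary: f)
  case 0
  then show ?case unfolding antidiag_mat_def by simp
next
  case (Suc n)
  let ?A = "antidiag_mat (Suc n) f"
  have A: "?A \<in> carrier_mat (Suc n) (Suc n)" unfolding antidiag_mat_def by simp
  have "det ?A = (\<Sum>j<Suc n. ?A $$ (0,j) * cofactor ?A 0 j)"
    by (rule laplace_expansion_row[OF A]) simp
  also have "\<dots> = (\<Sum>j<Suc n. if j = n then f 0 * cofactor ?A 0 n else 0)"
    by (rule sum.cong) (auto simp: antidiag_mat_def)
  also have "\<dots> = f 0 * cofactor ?A 0 n" by simp
  also have "mat_delete ?A 0 n = antidiag_mat n (\<lambda>i. f (Suc i))"
    unfolding mat_delete_def antidiag_mat_def by (rule eq_matI) auto
  then have "cofactor ?A 0 n = (-1)^n * det (antidiag_mat n (\<lambda>i. f (Suc i)))"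
    unfolding cofactor_def by simp
  also have "det (antidiag_mat n (\<lambda>i. f (Suc i))) = (-1)^(n * (n - 1) div 2) * (\<Prod>i<n. f (Suc i))"
    by (rule Suc.IH)
  finally have "det ?A = f 0 * ((-1)^n * ((-1)^(n * (n - 1) div 2) * (\<Prod>i<n. f (Suc i))))" .
  also have "\<dots> = (-1)^(n + n * (n - 1) div 2) * (f 0 * (\<Prod>i<n. f (Suc i)))"
    by (simp add: power_add)
  also have "n + n * (n - 1) div 2 = Suc n * (Suc n - 1) div 2"
    by (cases n) (simp_all add: algebra_simps)
  also have "f 0 * (\<Prod>i<n. f (Suc i)) = (\<Prod>i<Suc n. f i)"
    by (simp only: prod.lessThan_Suc_shift)
  finally show ?case .
qed

text \<open>If every row \<open>k \<ge> m\<close> of an \<open>N \<times> N\<close> matrix is a multiple \<open>d (k - m)\<close> of the unit vector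
  \<open>e\<^sub>k\<^sub>-\<^sub>m\<close>, moving the last \<open>m\<close> columns to the front leaves a block triangular matrix.\<close>

lemma det_shifted_diagonal_rows:
  fixes Q :: "'a::idom mat"
  assumes Q: "Q \<in> carrier_mat N N" and mN: "m \<le> N"
    and rows: "\<And>k j. m \<le> k \<Longrightarrow> k < N \<Longrightarrow> j < N \<Longrightarrow> Q $$ (k,j) = (if j = k - m then d (k - m) else 0)"
  shows "det Q = (-1)^(m*(N-m)) * det (mat m m (\<lambda>(i,j). Q $$ (i, N-m+j))) * (\<Prod>a<N-m. d a)"
proof -
  define n where "n = N - m"
  have N: "N = m + n" unfolding n_def using mN by simp
  have Q': "Q \<in> carrier_mat (m + n) (m + n)" using Q N by simp
  have "det Q = (-1)^(m*n) * det (mat (m + n) (m + n) (\<lambda>(i,j). Q $$ (i, if j < m then j + n else j - m)))"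
    by (rule det_swap_cols[OF Q'])
  also have "mat (m + n) (m + n) (\<lambda>(i,j). Q $$ (i, if j < m then j + n else j - m))
    = four_block_mat (mat m m (\<lambda>(i,j). Q $$ (i, N-m+j))) (mat m n (\<lambda>(i,j). Q $$ (i,j)))
        (0\<^sub>m n m) (mat n n (\<lambda>(i,j). if i = j then d i else 0))"
    (is "?L = ?R")
  proof (rule eq_matI)
    fix i j assume "i < dim_row ?R" and "j < dim_col ?R"
    then have i: "i < m + n" and j: "j < m + n" by auto
    show "?L $$ (i,j) = ?R $$ (i,j)"
    proof (cases "i < m")
      case True
      then show ?thesis using i j unfolding n_def by (auto simp: add.commute)
    next
      case False
      have r: "Q $$ (i, c) = (if c = i - m then d (i - m) else 0)" if "c < N" for c
        using rows[of i c] False i that N by simp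
      show ?thesis
      proof (cases "j < m")
        case True
        then show ?thesis using False i j r[of "j + n"] N by auto
      next
        case False2: False
        then show ?thesis using False i j r[of "j - m"] N by auto
      qed
    qed
  qed auto
  also have "det ?R = det (mat m m (\<lambda>(i,j). Q $$ (i, N-m+j))) * det (mat n n (\<lambda>(i,j). if i = j then d i else 0))"
    by (rule det_four_block_mat_lower_left_zero) auto
  also have "det (mat n n (\<lambda>(i,j). if i = j then d i else 0)) = (\<Prod>a<n. d a)"
    by (subst det_upper_triangular'[of _ n]) auto
  finally show ?thesis unfolding n_def by simp
qed

lemma det_first_row_antidiag:
  fixes G :: "'a::idom mat"
  assumes G: "G \<in> carrier_mat m m" and m: "m \<ge> 1"
    and zero: "\<And>i j. 1 \<le> i \<Longrightarrow> i < m \<Longrightarrow> j < m \<Longrightarrow> j \<noteq> m - i \<Longrightarrow> G $$ (i,j) = 0"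
  shows "det G = G $$ (0,0) * (-1)^((m-1)*(m-2) div 2) * (\<Prod>i<m-1. G $$ (i+1, m-1-i))"
proof -
  define n where "n = m - 1"
  have mn: "m = 1 + n" unfolding n_def using m by simp
  have "G = four_block_mat (mat 1 1 (\<lambda>_. G $$ (0,0))) (mat 1 n (\<lambda>(i,j). G $$ (0, j+1)))
        (0\<^sub>m n 1) (antidiag_mat n (\<lambda>i. G $$ (i+1, m-1-i)))"
    (is "_ = ?R")
  proof (rule eq_matI)
    fix i j assume "i < dim_row ?R" and "j < dim_col ?R"
    then have i: "i < 1 + n" and j: "j < 1 + n" by (auto simp: antidiag_mat_def)
    show "G $$ (i,j) = ?R $$ (i,j)"
    proof (cases "i = 0")
      case True
      then show ?thesis using j by (cases "j = 0") (auto simp: antidiag_mat_def)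
    next
      case False
      then have i1: "1 \<le> i" by simp
      show ?thesis
      proof (cases "j = m - i")
        case True
        then show ?thesis using i1 i j unfolding antidiag_mat_def mn by auto
      next
        case False
        have "\<not> ((i - 1) + (j - 1) = n - 1 \<and> j \<ge> 1)" using False i1 i j mn by auto
        then show ?thesis using i1 i j zero[of i j] False unfolding antidiag_mat_def mn by auto
      qed
    qed
  qed (use G mn in \<open>auto simp: antidiag_mat_def\<close>)
  then have "det G = det ?R" by simp
  also have "det ?R = det (mat 1 1 (\<lambda>_. G $$ (0,0))) * det (antidiag_mat n (\<lambda>i. G $$ (i+1, m-1-i)))"
    by (rule det_four_block_mat_lower_left_zero) (auto simp: antidiag_mat_def)
  also have "det (mat 1 1 (\<lambda>_. G $$ (0,0))) = G $$ (0,0)" by (subst det_single) auto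
  finally show ?thesis unfolding det_antidiag_mat n_def by (simp add: mult.assoc numeral_2_eq_2)
qed

lemma det_rotate_last_column_first:
  fixes G :: "'a::comm_ring_1 mat"
  assumes G: "G \<in> carrier_mat m m" and m: "m \<ge> 1"
  shows "det G = (-1)^(m-1) * det (mat m m (\<lambda>(i,j). G $$ (i, if j = 0 then m - 1 else j - 1)))"
proof -
  have G': "G \<in> carrier_mat (1 + (m-1)) (1 + (m-1))" using G m by simp
  have "det G = (-1)^(1*(m-1)) * det (mat (1 + (m-1)) (1 + (m-1))
      (\<lambda>(i,j). G $$ (i, if j < 1 then j + (m-1) else j - 1)))"
    by (rule det_swap_cols[OF G'])
  also have "mat (1 + (m-1)) (1 + (m-1)) (\<lambda>(i,j). G $$ (i, if j < 1 then j + (m-1) else j - 1))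
     = mat m m (\<lambda>(i,j). G $$ (i, if j = 0 then m - 1 else j - 1))"
    using m by (intro eq_matI) auto
  finally show ?thesis by simp
qed

section \<open>Factorisation of the Hankel matrix\<close>

definition phi :: "rat poly fps" where "phi = (1 + fps_X) * (1 + fps_t * fps_X)"

lemma phi_expand: "phi = 1 + (1 + fps_t) * fps_X + fps_t * fps_X^2"
  by (simp add: phi_def algebra_simps power2_eq_square)

lemma phi_comp_U_fps: "phi oo U_fps = (1 + U_fps) * (1 + fps_t * U_fps)"
  unfolding phi_def
  by (simp add: fps_compose_mult_distrib fps_compose_add_distrib fps_t_def)

lemma U_fps_eq_X_mult_phi_comp: "U_fps = fps_X * (phi oo U_fps)"
  unfolding phi_comp_U_fps using U_fps_functional_eq by (simp add: algebra_simps)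

definition geom :: "nat \<Rightarrow> rat poly fps" where "geom k = (\<Sum>r<k. (fps_t * fps_X^2)^r)"

lemma geom_Suc: "geom (Suc k) = geom k + (fps_t * fps_X^2)^k"
  by (simp add: geom_def)

lemma geom_Suc': "fps_t * fps_X^2 * geom k + 1 = geom (Suc k)"
  by (induction k) (simp_all add: geom_def algebra_simps power2_eq_square)

text \<open>Row \<open>k\<close> of the middle factor in the factorisation of the Hankel matrix
  has generating function \<open>rho m k\<close>.\<close>

definition rho :: "nat \<Rightarrow> nat \<Rightarrow> rat poly fps" where
  "rho m k = (if k = 0 then fps_X^m else if k \<le> m then fps_X^(m-k) * phi * geom k
              else (fps_t * fps_X)^(k-m) * phi * geom m)"

definition rho_step :: "nat \<Rightarrow> nat \<Rightarrow> rat poly fps" where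
  "rho_step m k = rho m (k+1) + (if k \<ge> 1 then (1 + fps_t) * rho m k else 0)
     + (if k \<ge> 2 then fps_t * rho m (k-1) else 0)"

lemma X_mult_rho_step_below:
  assumes k: "k < m"
  shows "fps_X * rho_step m k = phi * rho m k"
proof -
  consider "k = 0" | "k = 1" | "k \<ge> 2" by linarith
  then show ?thesis
  proof cases
    case 1
    obtain d where d: "m = d + 1" using k 1 by (intro that[of "m - 1"]) simp
    show ?thesis using 1 unfolding rho_step_def rho_def d
      by (simp add: geom_Suc geom_def algebra_simps)
  next
    case 2
    obtain d where d: "m = d + 2" using k 2 by (intro that[of "m - 2"]) linarith
    have "fps_X * rho_step m k = fps_X * (fps_X^d * phi * geom 2 + (1 + fps_t) * (fps_X^(d+1) * phi * geom 1))"
      unfolding rho_step_def rho_def d using 2 by (simp add: eval_nat_numeral)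
    also have "\<dots> = phi * (fps_X^(d+1) * phi * geom 1)"
      unfolding phi_expand by (simp add: geom_Suc geom_def eval_nat_numeral power_add algebra_simps)
    finally show ?thesis unfolding rho_def d using 2 by simp
  next
    case 3
    obtain d i where d: "m = i + d + 3" and i: "k = i + 2"
      using k 3 by (intro that[of "k - 2" "m - k - 1"]) linarith+
    have g3: "geom (i+3) = geom (i+1) + (fps_t * fps_X^2)^(i+1) + (fps_t * fps_X^2)^(i+2)"
      and g2: "geom (i+2) = geom (i+1) + (fps_t * fps_X^2)^(i+1)"
      by (simp_all add: geom_Suc eval_nat_numeral)
    have "fps_X * rho_step m k = fps_X * (fps_X^d * phi * geom (i+3)
        + (1 + fps_t) * (fps_X^(d+1) * phi * geom (i+2)) + fps_t * (fps_X^(d+2) * phi * geom (i+1)))"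
      unfolding rho_step_def rho_def d i by (simp add: eval_nat_numeral)
    also have "\<dots> = phi * (fps_X^(d+1) * phi * geom (i+2))"
      unfolding g3 g2 phi_expand by (simp add: power_add algebra_simps power2_eq_square)
    finally show ?thesis unfolding rho_def d i by (simp add: eval_nat_numeral)
  qed
qed

lemma X_mult_rho_step_above:
  assumes m: "m \<ge> 1" and k: "m \<le> k"
  shows "fps_X * rho_step m k = phi * (rho m k - (if k = m then 1 else 0))"
proof (cases "k = m")
  case True
  have gm: "geom m = fps_t * fps_X^2 * geom (m-1) + 1"
    using geom_Suc'[of "m-1"] m by simp
  have "fps_X * rho_step m k = fps_X * ((fps_t * fps_X) * phi * geom m + (1 + fps_t) * (phi * geom m)
      + fps_t * (fps_X * phi * geom (m-1)))"
  proof (cases "m = 1")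
    case True
    then show ?thesis unfolding rho_step_def rho_def \<open>k = m\<close> by (simp add: geom_def)
  next
    case False
    then show ?thesis unfolding rho_step_def rho_def \<open>k = m\<close> using m by simp
  qed
  also have "\<dots> = phi * (phi * geom m - 1)"
    unfolding gm phi_expand by (simp add: algebra_simps power2_eq_square)
  finally show ?thesis unfolding rho_def True using m by simp
next
  case False
  obtain e where e: "k = m + 1 + e" using k False by (intro that[of "k - m - 1"]) linarith
  have r: "rho m (k-1) = (fps_t * fps_X)^e * phi * geom m"
    unfolding rho_def e using m by auto
  have "fps_X * rho_step m k = fps_X * ((fps_t * fps_X)^(e+2) * phi * geom m
      + (1 + fps_t) * ((fps_t * fps_X)^(e+1) * phi * geom m) + fps_t * ((fps_t * fps_X)^e * phi * geom m))"
    unfolding rho_step_def r[symmetric] unfolding rho_def e using m by (simp add: eval_nat_numeral)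
  also have "\<dots> = phi * ((fps_t * fps_X)^(e+1) * phi * geom m)"
    unfolding phi_expand by (simp add: power_add algebra_simps power2_eq_square)
  finally show ?thesis unfolding rho_def e using m by simp
qed

lemma X_mult_rho_step:
  assumes m: "m \<ge> 1"
  shows "fps_X * rho_step m k = phi * (rho m k - (if k = m then 1 else 0))"
  using X_mult_rho_step_below[of k m] X_mult_rho_step_above[OF m, of k] by (cases "k < m") simp_all

lemma X_mult_rho_step_comp:
  assumes m: "m \<ge> 1"
  shows "fps_X * (rho_step m k oo U_fps) = (rho m k oo U_fps) - (if k = m then 1 else 0)"
proof -
  have "(fps_X * rho_step m k) oo U_fps = (phi * (rho m k - (if k = m then 1 else 0))) oo U_fps"
    using X_mult_rho_step[OF m] by simp
  then have "U_fps * (rho_step m k oo U_fps) = (phi oo U_fps) * ((rho m k oo U_fps) - (if k = m then 1 else 0))"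
    by (simp add: fps_compose_mult_distrib fps_compose_sub_distrib)
  then have "(phi oo U_fps) * (fps_X * (rho_step m k oo U_fps))
      = (phi oo U_fps) * ((rho m k oo U_fps) - (if k = m then 1 else 0))"
    by (subst (asm) U_fps_eq_X_mult_phi_comp) (simp add: algebra_simps)
  moreover have "fps_nth (phi oo U_fps) 0 = 1"
    by (simp add: phi_def fps_t_def)
  then have "phi oo U_fps \<noteq> 0" by (metis fps_zero_nth zero_neq_one)
  ultimately show ?thesis by simp
qed

lemma rho_step_comp:
  "rho_step m k oo U_fps = (rho m (k+1) oo U_fps) + (if k \<ge> 1 then (1 + fps_t) * (rho m k oo U_fps) else 0)
     + (if k \<ge> 2 then fps_t * (rho m (k-1) oo U_fps) else 0)"
  by (simp add: rho_step_def fps_compose_add_distrib fps_compose_mult_distrib fps_t_def)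

definition riordan :: "nat \<Rightarrow> nat \<Rightarrow> rat poly" where "riordan i k = fps_nth (U_fps^k) i"

lemma riordan_eq_0: "i < k \<Longrightarrow> riordan i k = 0"
  unfolding riordan_def using startsby_zero_power_prefix[of U_fps k] by simp

lemma riordan_diag: "riordan k k = 1"
  unfolding riordan_def using startsby_zero_power_nth_same[of U_fps k]
  by (simp add: U_fps_nth narayana_1)

lemma riordan_Suc_Suc:
  "riordan (Suc i) (Suc k) = riordan i k + (1 + tvar) * riordan i (Suc k) + tvar * riordan i (Suc (Suc k))"
proof -
  have "U_fps^(Suc k) = U_fps * U_fps^k" by simp
  also have "\<dots> = fps_X * ((1 + U_fps) * (1 + fps_t * U_fps)) * U_fps^k"
    by (subst U_fps_functional_eq) simp
  also have "\<dots> = fps_X * (U_fps^k + fps_const (1 + tvar) * U_fps^(Suc k) + fps_const tvar * U_fps^(Suc (Suc k)))"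
    by (simp add: fps_t_def algebra_simps flip: fps_const_add)
  finally show ?thesis unfolding riordan_def
    by (metis (no_types, lifting) fps_X_mult_nth fps_add_nth fps_mult_left_const_nth diff_Suc_1 nat.distinct(1))
qed

text \<open>Summation by parts for the three-term recurrence of \<open>riordan\<close>.\<close>

lemma sum_tridiagonal_transpose:
  fixes a f :: "nat \<Rightarrow> 'a::comm_ring_1"
  assumes zero: "\<forall>j>i. a j = 0"
  shows "(\<Sum>k\<le>Suc i. (if k = 0 then 0 else a (k-1) + c * a k + d * a (k+1)) * f k)
       = (\<Sum>k\<le>i. a k * (f (Suc k) + (if k \<ge> 1 then c * f k else 0) + (if k \<ge> 2 then d * f (k-1) else 0)))"
proof -
  have L: "(\<Sum>k\<le>Suc i. (if k = 0 then 0 else a (k-1) + c * a k + d * a (k+1)) * f k)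
     = (\<Sum>k\<le>i. a k * f (Suc k)) + c * (\<Sum>k\<le>i. a (Suc k) * f (Suc k))
       + d * (\<Sum>k\<le>i. a (Suc (Suc k)) * f (Suc k))"
    unfolding sum.atMost_Suc_shift by (simp add: sum.distrib sum_distrib_left algebra_simps)
  have s1: "(\<Sum>k\<le>i. a (Suc k) * f (Suc k)) = (\<Sum>k\<le>i. (if k \<ge> 1 then a k * f k else 0))"
  proof -
    have "(\<Sum>k\<le>Suc i. (if k \<ge> 1 then a k * f k else 0)) = (\<Sum>k\<le>i. a (Suc k) * f (Suc k))"
      unfolding sum.atMost_Suc_shift by simp
    moreover have "(\<Sum>k\<le>Suc i. (if k \<ge> 1 then a k * f k else 0)) = (\<Sum>k\<le>i. (if k \<ge> 1 then a k * f k else 0))"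
      using zero by simp
    ultimately show ?thesis by simp
  qed
  have s2: "(\<Sum>k\<le>i. a (Suc (Suc k)) * f (Suc k)) = (\<Sum>k\<le>i. (if k \<ge> 2 then a k * f (k-1) else 0))"
  proof -
    have "(\<Sum>k\<le>Suc (Suc i). (if k \<ge> 2 then a k * f (k-1) else 0)) = (\<Sum>k\<le>i. a (Suc (Suc k)) * f (Suc k))"
      unfolding sum.atMost_Suc_shift by simp
    moreover have "(\<Sum>k\<le>Suc (Suc i). (if k \<ge> 2 then a k * f (k-1) else 0))
        = (\<Sum>k\<le>i. (if k \<ge> 2 then a k * f (k-1) else 0))"
      using zero by simp
    ultimately show ?thesis by simp
  qed
  have r1: "(\<Sum>k\<le>i. a k * (if k \<ge> 1 then c * f k else 0)) = c * (\<Sum>k\<le>i. (if k \<ge> 1 then a k * f k else 0))"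
    by (subst sum_distrib_left) (rule sum.cong; simp)
  have r2: "(\<Sum>k\<le>i. a k * (if k \<ge> 2 then d * f (k-1) else 0)) = d * (\<Sum>k\<le>i. (if k \<ge> 2 then a k * f (k-1) else 0))"
    by (subst sum_distrib_left) (rule sum.cong; simp)
  have R: "(\<Sum>k\<le>i. a k * (f (Suc k) + (if k \<ge> 1 then c * f k else 0) + (if k \<ge> 2 then d * f (k-1) else 0)))
    = (\<Sum>k\<le>i. a k * f (Suc k)) + (\<Sum>k\<le>i. a k * (if k \<ge> 1 then c * f k else 0))
      + (\<Sum>k\<le>i. a k * (if k \<ge> 2 then d * f (k-1) else 0))"
    by (simp only: distrib_left sum.distrib)
  show ?thesis unfolding L s1 s2 R r1 r2 ..
qed

lemma fps_X_mult_fps_shift_Suc: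
  fixes f :: "'a::comm_ring_1 fps"
  shows "fps_X * fps_shift (Suc i) f = fps_shift i f - fps_const (fps_nth f i)"
proof (rule fps_ext)
  fix n show "fps_nth (fps_X * fps_shift (Suc i) f) n = fps_nth (fps_shift i f - fps_const (fps_nth f i)) n"
    by (cases n) (subst fps_X_mult_nth, simp)+
qed

lemma sum_riordan_rho_comp:
  assumes m: "m \<ge> 1"
  shows "(\<Sum>k\<le>i. fps_const (riordan i k) * (rho m k oo U_fps)) = fps_shift i (U_fps^m)"
proof (induction i)
  case 0
  have "rho m 0 oo U_fps = (fps_X oo U_fps)^m"
    unfolding rho_def using fps_compose_power[OF U_fps_nth_0, of fps_X m] by simp
  then have "rho m 0 oo U_fps = U_fps^m" by simp
  then show ?case by (simp add: riordan_def)
next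
  case (Suc i)
  define A where "A k = fps_const (riordan i k)" for k
  have A0: "\<forall>j>i. A j = 0" unfolding A_def using riordan_eq_0 by simp
  have "1 + fps_const tvar = fps_const (1 + tvar)"
    by (simp add: fps_eq_iff)
  then have rec: "fps_const (riordan (Suc i) k)
      = (if k = 0 then 0 else A (k-1) + (1 + fps_t) * A k + fps_t * A (k+1))" for k
    by (cases k) (simp_all add: A_def riordan_def[of "Suc i" 0] riordan_Suc_Suc fps_t_def)
  have "(\<Sum>k\<le>Suc i. fps_const (riordan (Suc i) k) * (rho m k oo U_fps))
      = (\<Sum>k\<le>i. A k * (rho_step m k oo U_fps))"
    unfolding rec sum_tridiagonal_transpose[OF A0] rho_step_comp by simp
  moreover have "fps_X * (\<Sum>k\<le>i. A k * (rho_step m k oo U_fps))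
      = (\<Sum>k\<le>i. A k * (rho m k oo U_fps)) - (\<Sum>k\<le>i. (if k = m then A k else 0))"
  proof -
    have "fps_X * (A k * (rho_step m k oo U_fps)) = A k * (rho m k oo U_fps) - (if k = m then A k else 0)"
      for k
    proof -
      have "fps_X * (A k * (rho_step m k oo U_fps)) = A k * (fps_X * (rho_step m k oo U_fps))"
        by (simp only: mult.left_commute)
      then show ?thesis unfolding X_mult_rho_step_comp[OF m] by (simp add: right_diff_distrib)
    qed
    then show ?thesis by (simp add: sum_distrib_left sum_subtractf)
  qed
  moreover have "(\<Sum>k\<le>i. (if k = m then A k else 0)) = fps_const (fps_nth (U_fps^m) i)"
    using A0 by (cases "m \<le> i") (simp_all add: A_def riordan_def)
  ultimately have "fps_X * (\<Sum>k\<le>Suc i. fps_const (riordan (Suc i) k) * (rho m k oo U_fps))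
      = fps_X * fps_shift (Suc i) (U_fps^m)"
    unfolding fps_X_mult_fps_shift_Suc Suc.IH[unfolded A_def[symmetric]] by simp
  then show ?case by simp
qed

lemma U_fps_power_nth_add:
  assumes m: "m \<ge> 1"
  shows "fps_nth (U_fps^m) (i+j) = (\<Sum>k\<le>i. riordan i k * (\<Sum>l\<le>j. fps_nth (rho m k) l * riordan j l))"
proof -
  have "fps_nth (U_fps^m) (i+j) = fps_nth (fps_shift i (U_fps^m)) j" by (simp add: add.commute)
  also have "\<dots> = (\<Sum>k\<le>i. riordan i k * fps_nth (rho m k oo U_fps) j)"
    unfolding sum_riordan_rho_comp[OF m, symmetric] by (simp add: fps_sum_nth)
  finally show ?thesis
    unfolding fps_compose_nth riordan_def atMost_atLeast0 .
qed

lemma gamma2m_eq_U_fps_power_nth: "gamma2m m (int i + int j - int m) = fps_nth (U_fps^m) (i+j)"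
proof -
  have "U_fps^m = fps_X^m * G_fps^m" unfolding U_fps_eq_X_mult_G by (simp add: power_mult_distrib)
  then have "fps_nth (U_fps^m) (i+j) = (if i + j < m then 0 else fps_nth (G_fps^m) (i+j-m))"
    by (simp add: fps_X_power_mult_nth)
  moreover have "nat (int i + int j - int m) = i + j - m" "\<not> int i + int j - int m < 0" if "\<not> i + j < m"
    using that by simp_all
  ultimately show ?thesis unfolding gamma2m_def by (cases "i + j < m") simp_all
qed

lemma sum_lessThan_eq_sum_atMost:
  fixes f :: "nat \<Rightarrow> 'a::comm_monoid_add"
  assumes "i < N" and "\<And>k. i < k \<Longrightarrow> f k = 0"
  shows "(\<Sum>k<N. f k) = (\<Sum>k\<le>i. f k)"
  by (rule sum.mono_neutral_right) (use assms in auto)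

definition riordan_mat :: "nat \<Rightarrow> rat poly mat" where
  "riordan_mat N = mat N N (\<lambda>(i,k). riordan i k)"

definition rho_mat :: "nat \<Rightarrow> nat \<Rightarrow> rat poly mat" where
  "rho_mat m N = mat N N (\<lambda>(k,l). fps_nth (rho m k) l)"

lemma hankel_mat_factorization:
  assumes m: "m \<ge> 1"
  shows "mat N N (\<lambda>(i,j). gamma2m m (int i + int j - int m))
      = riordan_mat N * rho_mat m N * (riordan_mat N)\<^sup>T"
proof (rule eq_matI)
  fix i j assume "i < dim_row (riordan_mat N * rho_mat m N * (riordan_mat N)\<^sup>T)"
    and "j < dim_col (riordan_mat N * rho_mat m N * (riordan_mat N)\<^sup>T)"
  then have i: "i < N" and j: "j < N" by (simp_all add: riordan_mat_def)
  have "(riordan_mat N * rho_mat m N * (riordan_mat N)\<^sup>T) $$ (i,j)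
      = (\<Sum>l<N. (\<Sum>k<N. riordan i k * fps_nth (rho m k) l) * riordan j l)"
    using i j by (simp add: riordan_mat_def rho_mat_def scalar_prod_def atLeast0LessThan)
  also have "\<dots> = (\<Sum>l<N. \<Sum>k<N. riordan i k * fps_nth (rho m k) l * riordan j l)"
    by (simp add: sum_distrib_right)
  also have "\<dots> = (\<Sum>k<N. \<Sum>l<N. riordan i k * fps_nth (rho m k) l * riordan j l)"
    by (rule sum.swap)
  also have "\<dots> = (\<Sum>k<N. riordan i k * (\<Sum>l<N. fps_nth (rho m k) l * riordan j l))"
    by (simp add: sum_distrib_left mult.assoc)
  also have "\<dots> = (\<Sum>k<N. riordan i k * (\<Sum>l\<le>j. fps_nth (rho m k) l * riordan j l))"
    by (subst sum_lessThan_eq_sum_atMost[OF j]) (simp_all add: riordan_eq_0)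
  also have "\<dots> = (\<Sum>k\<le>i. riordan i k * (\<Sum>l\<le>j. fps_nth (rho m k) l * riordan j l))"
    by (rule sum_lessThan_eq_sum_atMost[OF i]) (simp add: riordan_eq_0)
  also have "\<dots> = gamma2m m (int i + int j - int m)"
    by (simp add: gamma2m_eq_U_fps_power_nth U_fps_power_nth_add[OF m])
  finally show "mat N N (\<lambda>(i,j). gamma2m m (int i + int j - int m)) $$ (i,j)
      = (riordan_mat N * rho_mat m N * (riordan_mat N)\<^sup>T) $$ (i,j)"
    using i j by simp
qed (simp_all add: riordan_mat_def)

lemma det_riordan_mat: "det (riordan_mat N) = 1"
proof -
  have R: "riordan_mat N \<in> carrier_mat N N" by (simp add: riordan_mat_def)
  have "det (riordan_mat N) = det ((riordan_mat N)\<^sup>T)" by (rule det_transpose[OF R, symmetric])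
  also have "\<dots> = (\<Prod>i<N. (riordan_mat N)\<^sup>T $$ (i,i))"
    by (rule det_upper_triangular'[of _ N]) (auto simp: riordan_mat_def riordan_eq_0)
  also have "\<dots> = 1" by (simp add: riordan_mat_def riordan_diag)
  finally show ?thesis .
qed

lemma hankelH_eq_det_rho_mat:
  assumes m: "m \<ge> 1"
  shows "hankelH m N = det (rho_mat m N)"
proof -
  have c: "riordan_mat N \<in> carrier_mat N N" "rho_mat m N \<in> carrier_mat N N"
    by (simp_all add: riordan_mat_def rho_mat_def)
  show ?thesis
    unfolding hankelH_def hankel_mat_factorization[OF m]
    using c by (simp add: det_mult[of _ N] det_transpose det_riordan_mat)
qed

section \<open>Reduction to an \<open>m \<times> m\<close> determinant\<close>

text \<open>\<open>omega m\<close> is the inverse of \<open>rho m m = phi * geom m\<close>: with \<open>phi * psi = 1 - t q\<^sup>2\<close>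
  and \<open>(1 - (t q\<^sup>2)\<^sup>m) * alpha m = 1\<close>, the geometric sum \<open>geom m\<close> telescopes.\<close>

definition alpha :: "nat \<Rightarrow> rat poly fps" where
  "alpha m = Abs_fps (\<lambda>n. if (2*m) dvd n then tvar^(n div 2) else 0)"

definition psi :: "rat poly fps" where
  "psi = Abs_fps (\<lambda>n. if n = 0 then 1 else (-1)^n * (1 + tvar^n))"

definition omega :: "nat \<Rightarrow> rat poly fps" where "omega m = psi * alpha m"

lemma phi_mult_psi: "phi * psi = 1 - fps_t * fps_X^2"
proof (rule fps_ext)
  fix n
  have phi_q: "phi = fps_const 1 + fps_const (1 + tvar) * fps_X + fps_const tvar * fps_X^2"
    unfolding phi_expand fps_t_def by (simp add: fps_eq_iff)
  have "fps_nth (phi * psi) n = fps_nth psi n + (if n = 0 then 0 else (1 + tvar) * fps_nth psi (n-1))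
      + (if n < 2 then 0 else tvar * fps_nth psi (n-2))"
    unfolding phi_q fps_nth_quadratic_mult by simp
  also have "\<dots> = fps_nth (1 - fps_t * fps_X^2) n"
  proof -
    consider "n = 0" | "n = 1" | "n = 2" | "n \<ge> 3" by linarith
    then show ?thesis
    proof cases
      case 4
      obtain k where k: "n = k + 3" using 4 by (intro that[of "n - 3"]) simp
      have "(-1::rat poly)^(k+3) * (1 + tvar^(k+3)) + (1 + tvar) * ((-1)^(k+2) * (1 + tvar^(k+2)))
         + tvar * ((-1)^(k+1) * (1 + tvar^(k+1))) = 0"
        by (simp add: algebra_simps power_add eval_nat_numeral)
      then show ?thesis unfolding k by (simp add: psi_def fps_t_def eval_nat_numeral)
    qed (simp_all add: psi_def fps_t_def algebra_simps numeral_2_eq_2 power2_eq_square)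
  qed
  finally show "fps_nth (phi * psi) n = fps_nth (1 - fps_t * fps_X^2) n" .
qed

lemma geom_telescope: "(1 - fps_t * fps_X^2) * geom k = 1 - (fps_t * fps_X^2)^k"
proof -
  have "fps_t * fps_X^2 * geom k + 1 = geom k + (fps_t * fps_X^2)^k"
    using geom_Suc'[of k] geom_Suc[of k] by simp
  then show ?thesis by (simp add: algebra_simps)
qed

lemma fps_t_X2_power: "(fps_t * fps_X^2)^k = fps_const (tvar^k) * fps_X^(2*k)"
  unfolding fps_t_def by (simp add: power_mult_distrib power_mult fps_const_power)

lemma alpha_nth: "fps_nth (alpha m) n = (if (2*m) dvd n then tvar^(n div 2) else 0)"
  unfolding alpha_def by simp

lemma alpha_inverse:
  assumes m: "m \<ge> 1"
  shows "(1 - (fps_t * fps_X^2)^m) * alpha m = 1"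
proof (rule fps_ext)
  fix n
  have e: "(1 - (fps_t * fps_X^2)^m) * alpha m = alpha m - fps_const (tvar^m) * (fps_X^(2*m) * alpha m)"
    unfolding fps_t_X2_power by (simp add: algebra_simps)
  show "fps_nth ((1 - (fps_t * fps_X^2)^m) * alpha m) n = fps_nth 1 n"
  proof (cases "n < 2*m")
    case True
    have "(2*m) dvd n \<longleftrightarrow> n = 0"
      using True by (auto dest: dvd_imp_le)
    then show ?thesis unfolding e using True by (simp add: fps_X_power_mult_nth alpha_nth)
  next
    case False
    then obtain r where r: "n = 2*m + r" by (intro that[of "n - 2*m"]) simp
    have d: "(2*m) dvd n \<longleftrightarrow> (2*m) dvd r" unfolding r by simp
    have h: "n div 2 = m + r div 2" unfolding r by simp
    show ?thesis unfolding e using m by (simp add: fps_X_power_mult_nth alpha_nth d h r power_add)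
  qed
qed

lemma phi_geom_omega: 
  assumes m: "m \<ge> 1"
  shows "phi * geom m * omega m = 1"
proof -
  have "phi * geom m * omega m = (phi * psi) * geom m * alpha m"
    unfolding omega_def by (simp add: ac_simps)
  also have "\<dots> = 1"
    unfolding phi_mult_psi geom_telescope using alpha_inverse[OF m] .
  finally show ?thesis .
qed

lemma omega_nth_rec:
  assumes m: "m \<ge> 1"
  shows "fps_nth (omega m) n = fps_nth psi n + (if n \<ge> 2*m then tvar^m * fps_nth (omega m) (n - 2*m) else 0)"
proof -
  have "(1 - (fps_t * fps_X^2)^m) * omega m = psi" unfolding omega_def
    using alpha_inverse[OF m] by (metis mult.left_commute mult.right_neutral)
  then have "omega m = psi + fps_const (tvar^m) * (fps_X^(2*m) * omega m)"
    unfolding fps_t_X2_power by (simp add: algebra_simps)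
  then have "fps_nth (omega m) n = fps_nth (psi + fps_const (tvar^m) * (fps_X^(2*m) * omega m)) n"
    by (rule arg_cong)
  then show ?thesis by (simp add: fps_X_power_mult_nth not_less)
qed

lemma qnum_Suc_Suc: "qnum (Suc (Suc j)) x = 1 + x^(Suc j) + x * qnum j (x :: 'a::comm_ring_1)"
proof -
  have "qnum (Suc j) x = 1 + x * qnum j x"
    unfolding qnum_def by (simp only: sum.lessThan_Suc_shift sum_distrib_left power_Suc power_0)
  then show ?thesis by (simp add: qnum_def algebra_simps)
qed

lemma omega_nth_mult:
  assumes m: "m \<ge> 1"
  shows "fps_nth (omega m) (m*j) = (-1)^(m*j) * qnum (j+1) (tvar^m)"
proof (induction j rule: less_induct)
  case (less j)
  consider "j = 0" | "j = 1" | "j \<ge> 2" by linarith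
  then show ?case
  proof cases
    case 1
    then show ?thesis using omega_nth_rec[OF m, of 0] m by (simp add: psi_def qnum_def)
  next
    case 2
    then show ?thesis using omega_nth_rec[OF m, of m] m by (simp add: psi_def qnum_def)
  next
    case 3
    then obtain i where i: "j = i + 2" by (intro that[of "j - 2"]) simp
    have IH: "fps_nth (omega m) (m*i) = (-1)^(m*i) * qnum (i+1) (tvar^m)" using less[of i] i by simp
    have "m * j \<ge> 2 * m" "m * j - 2 * m = m * i" using i by (simp_all add: algebra_simps)
    then have "fps_nth (omega m) (m*j)
        = (-1)^(m*j) * (1 + tvar^(m*j)) + tvar^m * ((-1)^(m*i) * qnum (i+1) (tvar^m))"
      using omega_nth_rec[OF m, of "m*j"] IH m i by (simp add: psi_def)
    also have "(-1)^(m*i) = ((-1)^(m*j) :: rat poly)"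
      unfolding i by (simp add: algebra_simps power_add power_mult)
    also have "(-1)^(m*j) * (1 + tvar^(m*j)) + tvar^m * ((-1)^(m*j) * qnum (i+1) (tvar^m))
        = (-1)^(m*j) * qnum (j+1) (tvar^m)"
      unfolding i by (simp add: qnum_Suc_Suc algebra_simps power_add power_mult[symmetric] mult.commute[of m])
    finally show ?thesis .
  qed
qed

lemma omega_nth_0: "fps_nth (omega m) 0 = 1"
  by (simp add: omega_def psi_def alpha_nth)

lemma rho_omega_0_nth: "fps_nth (rho m 0 * omega m) l = (if l < m then 0 else fps_nth (omega m) (l - m))"
  by (simp add: rho_def fps_X_power_mult_nth)

lemma rho_omega_ge:
  assumes m: "m \<ge> 1" and k: "m \<le> k"
  shows "rho m k * omega m = (fps_t * fps_X)^(k-m)"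
proof -
  have "rho m k = (fps_t * fps_X)^(k-m) * (phi * geom m)"
    unfolding rho_def using m k by (cases "k = m") (simp_all add: ac_simps)
  then show ?thesis using phi_geom_omega[OF m] by (simp add: ac_simps)
qed

lemma fps_t_X_power_nth: "fps_nth ((fps_t * fps_X)^e) j = (if j = e then tvar^e else 0)"
  unfolding fps_t_def by (simp add: power_mult_distrib fps_const_power)

lemma mod_eq_iff_le_dvd_diff:
  fixes l c d :: nat
  assumes "c < d"
  shows "l mod d = c \<longleftrightarrow> c \<le> l \<and> d dvd (l - c)"
  using assms mod_eq_dvd_iff_nat[of c l d] by (metis mod_less_eq_dividend mod_less)

lemma fps_X_power_mult_alpha_nth:
  assumes c: "c < 2*m"
  shows "fps_nth (fps_X^c * alpha m) l = (if l mod (2*m) = c then tvar^(m * (l div (2*m))) else 0)"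
proof -
  have "fps_nth (fps_X^c * alpha m) l = (if c \<le> l \<and> (2*m) dvd (l - c) then tvar^((l - c) div 2) else 0)"
    by (auto simp: fps_X_power_mult_nth alpha_nth)
  moreover have "(l - c) div 2 = m * (l div (2*m))" if "l mod (2*m) = c"
  proof -
    have "l - c = 2 * (m * (l div (2*m)))"
      using that div_mult_mod_eq[of l "2*m"] by (simp add: algebra_simps)
    then show ?thesis by simp
  qed
  ultimately show ?thesis using mod_eq_iff_le_dvd_diff[OF c, of l] by auto
qed

lemma rho_omega_nth:
  assumes k: "1 \<le> k" "k < m"
  shows "fps_nth (rho m k * omega m) l
      = (if l mod (2*m) = m - k then tvar^(m * (l div (2*m))) else 0)
      - (if l mod (2*m) = m + k then tvar^(k + m * (l div (2*m))) else 0)"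
proof -
  have "rho m k * omega m = fps_X^(m-k) * ((phi * psi) * geom k * alpha m)"
    unfolding rho_def omega_def using k by (simp add: ac_simps)
  also have "\<dots> = fps_X^(m-k) * alpha m - fps_const (tvar^k) * (fps_X^(m-k) * fps_X^(2*k) * alpha m)"
    unfolding phi_mult_psi geom_telescope fps_t_X2_power by (simp add: algebra_simps)
  also have "fps_X^(m-k) * fps_X^(2*k) = (fps_X^(m+k) :: rat poly fps)"
    using k by (simp flip: power_add)
  finally have e: "rho m k * omega m
      = fps_X^(m-k) * alpha m - fps_const (tvar^k) * (fps_X^(m+k) * alpha m)" .
  have "m - k < 2*m" "m + k < 2*m" using k by simp_all
  then show ?thesis
    unfolding e fps_sub_nth fps_mult_left_const_nth
      fps_X_power_mult_alpha_nth[OF \<open>m - k < 2*m\<close>] fps_X_power_mult_alpha_nth[OF \<open>m + k < 2*m\<close>]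
    using k by (auto simp: power_add)
qed

text \<open>The \<open>m \<times> m\<close> matrix that remains of \<open>(rho m k * omega m)\<close> after the rows \<open>k \<ge> m\<close>,
  which are shifted monomials, have been removed.\<close>

definition corner_mat :: "nat \<Rightarrow> nat \<Rightarrow> rat poly mat" where
  "corner_mat m N = mat m m (\<lambda>(i,j). fps_nth (rho m i * omega m) (N - m + j))"

lemma hankelH_eq_det_rho_omega_mat:
  assumes m: "m \<ge> 1"
  shows "hankelH m N = det (mat N N (\<lambda>(k,j). fps_nth (rho m k * omega m) j))"
proof -
  define W where "W = mat N N (\<lambda>(l,j). if l \<le> j then fps_nth (omega m) (j-l) else (0 :: rat poly))"
  have "mat N N (\<lambda>(k,j). fps_nth (rho m k * omega m) j) = rho_mat m N * W"
  proof (rule eq_matI)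
    fix k j assume "k < dim_row (rho_mat m N * W)" "j < dim_col (rho_mat m N * W)"
    then have k: "k < N" and j: "j < N" by (simp_all add: rho_mat_def W_def)
    have "(rho_mat m N * W) $$ (k,j)
        = (\<Sum>l<N. fps_nth (rho m k) l * (if l \<le> j then fps_nth (omega m) (j-l) else 0))"
      using k j by (simp add: rho_mat_def W_def scalar_prod_def atLeast0LessThan)
    also have "\<dots> = (\<Sum>l\<le>j. fps_nth (rho m k) l * fps_nth (omega m) (j-l))"
      by (subst sum_lessThan_eq_sum_atMost[OF j]) auto
    also have "\<dots> = fps_nth (rho m k * omega m) j" by (simp add: fps_mult_nth atLeast0AtMost)
    finally show "mat N N (\<lambda>(k,j). fps_nth (rho m k * omega m) j) $$ (k,j) = (rho_mat m N * W) $$ (k,j)"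
      using k j by simp
  qed (simp_all add: rho_mat_def W_def)
  moreover have "det W = 1"
    unfolding W_def by (subst det_upper_triangular'[of _ N]) (auto simp: omega_nth_0)
  ultimately show ?thesis
    unfolding hankelH_eq_det_rho_mat[OF m] by (simp add: det_mult[of _ N] rho_mat_def W_def)
qed

lemma prod_power_lessThan: "(\<Prod>a<n. (x::'a::comm_monoid_mult)^a) = x^(n choose 2)"
proof -
  have "(\<Sum>a<n. a) = n choose 2"
    using Sum_Ico_nat[of 0 n] by (simp add: atLeast0LessThan choose_two)
  then show ?thesis by (simp add: power_sum[symmetric])
qed

lemma hankelH_eq_det_corner_mat:
  assumes m: "m \<ge> 1" and mN: "m \<le> N"
  shows "hankelH m N = (-1)^(m*(N-m)) * det (corner_mat m N) * tvar^((N-m) choose 2)"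
proof -
  let ?Q = "mat N N (\<lambda>(k,j). fps_nth (rho m k * omega m) j)"
  have "det ?Q = (-1)^(m*(N-m)) * det (mat m m (\<lambda>(i,j). ?Q $$ (i, N-m+j))) * (\<Prod>a<N-m. tvar^a)"
    by (rule det_shifted_diagonal_rows[OF _ mN]) (auto simp: rho_omega_ge[OF m] fps_t_X_power_nth)
  moreover have "mat m m (\<lambda>(i,j). ?Q $$ (i, N-m+j)) = corner_mat m N"
    using mN by (intro eq_matI) (auto simp: corner_mat_def)
  ultimately show ?thesis
    unfolding hankelH_eq_det_rho_omega_mat[OF m] prod_power_lessThan by simp
qed

lemma hankelH_eq_0_small:
  assumes m: "m \<ge> 1" and N: "1 \<le> N" "N \<le> m"
  shows "hankelH m N = 0"
  unfolding hankelH_eq_det_rho_omega_mat[OF m]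
  by (rule det_zero_row[of _ N 0]) (use N in \<open>auto simp: rho_omega_0_nth\<close>)

section \<open>Evaluation of the reduced determinant\<close>

lemma mult_add_mod_div:
  fixes d q c :: nat
  assumes "c < d"
  shows "(d * q + c) mod d = c" and "(d * q + c) div d = q"
  using assms by (simp_all add: mod_mult_self3 div_mult_self3)

lemma corner_mat_nth_0:
  assumes "j < m" and "N - m + j = m + l"
  shows "corner_mat m N $$ (0, j) = fps_nth (omega m) l"
proof -
  have "corner_mat m N $$ (0, j) = fps_nth (rho m 0 * omega m) (N - m + j)"
    using assms(1) by (simp add: corner_mat_def)
  also have "\<dots> = fps_nth (omega m) l"
    unfolding assms(2) rho_omega_0_nth by simp
  finally show ?thesis .
qed

lemma corner_mat_nth:
  assumes k: "1 \<le> k" "k < m" and j: "j < m" and l: "N - m + j = 2*m*q + c" and c: "c < 2*m"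
  shows "corner_mat m N $$ (k, j)
      = (if c = m - k then tvar^(m*q) else 0) - (if c = m + k then tvar^(k + m*q) else 0)"
proof -
  have "corner_mat m N $$ (k, j) = fps_nth (rho m k * omega m) (N - m + j)"
    using k j by (simp add: corner_mat_def)
  also have "\<dots> = (if (N - m + j) mod (2*m) = m - k then tvar^(m * ((N - m + j) div (2*m))) else 0)
      - (if (N - m + j) mod (2*m) = m + k then tvar^(k + m * ((N - m + j) div (2*m))) else 0)"
    by (rule rho_omega_nth[OF k])
  finally show ?thesis
    unfolding l mult_add_mod_div[OF c] .
qed

lemma omega_nth_even_mult:
  assumes "m \<ge> 1"
  shows "fps_nth (omega m) (2*m*q) = qnum (2*q+1) (tvar^m)"
proof -
  have "fps_nth (omega m) (m*(2*q)) = qnum (2*q+1) (tvar^m)"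
    using omega_nth_mult[OF assms, of "2*q"] by simp
  then show ?thesis by (simp add: ac_simps)
qed

lemma det_corner_mat_even:
  assumes m: "m \<ge> 1" and N: "N = 2*m*(q+1)"
  shows "det (corner_mat m N) = qnum (2*q+1) (tvar^m) * (\<Prod>i<m-1. -(tvar^(i+1+m*q)))"
proof -
  have entry: "corner_mat m N $$ (k, j) = (if j = k then -(tvar^(k+m*q)) else 0)"
    if "1 \<le> k" "k < m" "j < m" for k j
  proof -
    have "N - m + j = 2*m*q + (m + j)" using N by simp
    from corner_mat_nth[OF that this] show ?thesis
      using that by (simp, arith)
  qed
  have "corner_mat m N \<in> carrier_mat m m" by (simp add: corner_mat_def)
  then have "det (corner_mat m N) = (\<Prod>i<m. corner_mat m N $$ (i,i))"
    by (rule det_upper_triangular') (simp add: entry)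
  also have "\<dots> = corner_mat m N $$ (0,0) * (\<Prod>i<m-1. corner_mat m N $$ (Suc i, Suc i))"
    using m by (cases m) (simp_all only: prod.lessThan_Suc_shift, simp)
  also have "corner_mat m N $$ (0,0) = fps_nth (omega m) (2*m*q)"
    by (rule corner_mat_nth_0) (use m N in \<open>simp_all add: algebra_simps\<close>)
  also have "\<dots> = qnum (2*q+1) (tvar^m)"
    by (rule omega_nth_even_mult[OF m])
  also have "(\<Prod>i<m-1. corner_mat m N $$ (Suc i, Suc i)) = (\<Prod>i<m-1. -(tvar^(i+1+m*q)))"
    by (rule prod.cong) (auto simp: entry)
  finally show ?thesis .
qed

lemma corner_mat_carrier: "corner_mat m N \<in> carrier_mat m m"
  by (simp add: corner_mat_def)

lemma det_corner_mat_odd: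
  assumes m: "m \<ge> 1" and N: "N = m*(2*q+1)" and q: "q \<ge> 1"
  shows "det (corner_mat m N)
      = (-1)^(m*(2*q-1)) * qnum (2*q) (tvar^m) * (-1)^((m-1)*(m-2) div 2) * (tvar^(m*q))^(m-1)"
proof -
  have entry: "corner_mat m N $$ (k, j) = (if j = m - k then tvar^(m*q) else 0)"
    if "1 \<le> k" "k < m" "j < m" for k j
  proof -
    have "N - m + j = 2*m*q + j" using N by simp
    from corner_mat_nth[OF that this] show ?thesis
      using that by simp
  qed
  have "det (corner_mat m N) = corner_mat m N $$ (0,0) * (-1)^((m-1)*(m-2) div 2)
      * (\<Prod>i<m-1. corner_mat m N $$ (i+1, m-1-i))"
    by (rule det_first_row_antidiag[OF corner_mat_carrier m]) (simp add: entry)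
  also have "corner_mat m N $$ (0,0) = fps_nth (omega m) (m*(2*q-1))"
    by (rule corner_mat_nth_0) (use m N q in \<open>simp_all add: algebra_simps\<close>)
  also have "\<dots> = (-1)^(m*(2*q-1)) * qnum (2*q) (tvar^m)"
    using omega_nth_mult[OF m, of "2*q-1"] q by simp
  also have "(\<Prod>i<m-1. corner_mat m N $$ (i+1, m-1-i)) = (tvar^(m*q))^(m-1)"
    by (simp add: entry)
  finally show ?thesis .
qed

lemma det_corner_mat_even_Suc:
  assumes m: "m \<ge> 1" and N: "N = 2*m*(q+1) + 1"
  shows "det (corner_mat m N) = (-1)^(m-1)
      * ((-1)^(m*(2*q+1)) * qnum (2*q+2) (tvar^m) * (\<Prod>i<m-1. -(tvar^(i+1+m*q))))"
proof -
  define G where "G = mat m m (\<lambda>(i,j). corner_mat m N $$ (i, if j = 0 then m - 1 else j - 1))"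
  have G: "G \<in> carrier_mat m m" by (simp add: G_def)
  have entry: "G $$ (k, j) = (if j = k then -(tvar^(k+m*q)) else 0)"
    if "1 \<le> k" "k < m" "j < m" for k j
  proof (cases "j = 0")
    case True
    have "N - m + (m - 1) = 2*m*(q+1) + 0" using N m by simp
    from corner_mat_nth[OF that(1,2) _ this] m have "corner_mat m N $$ (k, m - 1) = 0"
      using that by simp
    then show ?thesis using True that by (simp add: G_def)
  next
    case False
    have "N - m + (j - 1) = 2*m*q + (m + j)" using N m False by simp
    from corner_mat_nth[OF that(1,2) _ this] have "corner_mat m N $$ (k, j - 1) = (if j = k then -(tvar^(k+m*q)) else 0)"
      using that by (simp, arith)
    then show ?thesis using False that by (simp add: G_def)
  qed
  have "det (corner_mat m N) = (-1)^(m-1) * det G"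
    unfolding G_def by (rule det_rotate_last_column_first[OF corner_mat_carrier m])
  also have "det G = (\<Prod>i<m. G $$ (i,i))"
    using G by (rule det_upper_triangular') (simp add: entry)
  also have "\<dots> = G $$ (0,0) * (\<Prod>i<m-1. G $$ (Suc i, Suc i))"
    using m by (cases m) (simp_all only: prod.lessThan_Suc_shift, simp)
  also have "G $$ (0,0) = corner_mat m N $$ (0, m - 1)"
    using m by (simp add: G_def)
  also have "\<dots> = fps_nth (omega m) (m*(2*q+1))"
    by (rule corner_mat_nth_0) (use m N in \<open>simp_all add: algebra_simps\<close>)
  also have "\<dots> = (-1)^(m*(2*q+1)) * qnum (2*q+2) (tvar^m)"
    using omega_nth_mult[OF m, of "2*q+1"] by simp
  also have "(\<Prod>i<m-1. G $$ (Suc i, Suc i)) = (\<Prod>i<m-1. -(tvar^(i+1+m*q)))"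
    by (rule prod.cong) (auto simp: entry)
  finally show ?thesis .
qed

lemma det_corner_mat_odd_Suc:
  assumes m: "m \<ge> 1" and N: "N = m*(2*q+1) + 1"
  shows "det (corner_mat m N) = (-1)^(m-1)
      * (qnum (2*q+1) (tvar^m) * (-1)^((m-1)*(m-2) div 2) * (tvar^(m*q))^(m-1))"
proof -
  define G where "G = mat m m (\<lambda>(i,j). corner_mat m N $$ (i, if j = 0 then m - 1 else j - 1))"
  have G: "G \<in> carrier_mat m m" by (simp add: G_def)
  have entry: "G $$ (k, j) = (if j = m - k then tvar^(m*q) else 0)"
    if "1 \<le> k" "k < m" "j < m" for k j
  proof (cases "j = 0")
    case True
    have "N - m + (m - 1) = 2*m*q + m" using N m by simp
    from corner_mat_nth[OF that(1,2) _ this] m have "corner_mat m N $$ (k, m - 1) = 0"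
      using that by simp
    then show ?thesis using True that by (simp add: G_def)
  next
    case False
    have "N - m + (j - 1) = 2*m*q + j" using N m False by simp
    from corner_mat_nth[OF that(1,2) _ this] have "corner_mat m N $$ (k, j - 1) = (if j = m - k then tvar^(m*q) else 0)"
      using that by simp
    then show ?thesis using False that by (simp add: G_def)
  qed
  have "det (corner_mat m N) = (-1)^(m-1) * det G"
    unfolding G_def by (rule det_rotate_last_column_first[OF corner_mat_carrier m])
  also have "det G = G $$ (0,0) * (-1)^((m-1)*(m-2) div 2) * (\<Prod>i<m-1. G $$ (i+1, m-1-i))"
    by (rule det_first_row_antidiag[OF G m]) (simp add: entry)
  also have "G $$ (0,0) = corner_mat m N $$ (0, m - 1)"
    using m by (simp add: G_def)
  also have "\<dots> = fps_nth (omega m) (2*m*q)"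
    by (rule corner_mat_nth_0) (use m N in \<open>simp_all add: algebra_simps\<close>)
  also have "\<dots> = qnum (2*q+1) (tvar^m)"
    by (rule omega_nth_even_mult[OF m])
  also have "(\<Prod>i<m-1. G $$ (i+1, m-1-i)) = (tvar^(m*q))^(m-1)"
    by (simp add: entry)
  finally show ?thesis .
qed

lemma det_corner_mat_eq_0:
  assumes m: "m \<ge> 1" and N: "N = m*n + r" and n: "n \<ge> 1" and r: "2 \<le> r" "r < m"
  shows "det (corner_mat m N) = 0"
proof (cases "even n")
  case True
  then obtain q where q: "n = 2*(q+1)"
    using n by (metis evenE Suc_eq_plus1 not0_implies_Suc not_one_le_zero mult_0_right)
  show ?thesis
  proof (rule det_zero_row[OF corner_mat_carrier, of 1])
    fix j assume j: "j < m"
    have k: "1 \<le> (1::nat)" "1 < m" using r by simp_all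
    show "corner_mat m N $$ (1, j) = 0"
    proof (cases "m + r + j < 2*m")
      case True
      have "N - m + j = 2*m*q + (m + r + j)" using N q by (simp add: algebra_simps)
      from corner_mat_nth[OF k j this True] show ?thesis using r by simp
    next
      case False
      have "N - m + j = 2*m*(q+1) + (r + j - m)" using N q False by (simp add: algebra_simps)
      moreover have "r + j - m < m - 1" using r j by arith
      ultimately show ?thesis using corner_mat_nth[OF k j, of N "q+1" "r + j - m"] by simp
    qed
  qed (use r in simp)
next
  case False
  then obtain q where q: "n = 2*q+1" by (metis oddE)
  show ?thesis
  proof (rule det_zero_row[OF corner_mat_carrier, of "m-1"])
    fix j assume j: "j < m"
    have k: "1 \<le> m - 1" "m - 1 < m" using r by simp_all
    have "N - m + j = 2*m*q + (r + j)" using N q by (simp add: algebra_simps)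
    from corner_mat_nth[OF k j this] show "corner_mat m N $$ (m-1, j) = 0"
      using r j by simp
  qed (use r in simp)
qed

lemma two_mult_choose_two: "2 * (n choose 2) = n * (n - 1)"
  unfolding choose_two by (cases n) simp_all

lemma prod_neg_power:
  "(\<Prod>i<n. -(x^(i+1+c))) = (-1)^n * x^((Suc n choose 2) + n*c)" for x :: "'a::comm_ring_1"
proof (induction n)
  case (Suc n)
  have "Suc (Suc n) choose 2 = (Suc n choose 2) + Suc n"
    by (simp add: numeral_2_eq_2)
  then show ?case using Suc by (simp add: power_add algebra_simps)
qed (simp add: binomial_eq_0)

lemma choose_two_Suc: "Suc n choose 2 = (n choose 2) + n"
  by (simp add: numeral_2_eq_2)

lemma mult_choose_two: "n * m * (m - 1) div 2 = n * (m choose 2)"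
proof -
  have "n * m * (m - 1) = 2 * (n * (m choose 2))"
    by (simp only: two_mult_choose_two[symmetric] mult.assoc mult.left_commute[of n 2])
  then show ?thesis by (simp only: nonzero_mult_div_cancel_left zero_neq_numeral not_False_eq_True)
qed

lemma neg_one_power_eq_if_even_add: "even (a + b) \<Longrightarrow> (-1::'a::ring_1)^a = (-1)^b"
  by (auto simp: minus_one_power_iff)

lemma neg_one_power_eq_neg_if_odd_add: "odd (a + b) \<Longrightarrow> (-1::'a::ring_1)^a = - ((-1)^b)"
  by (auto simp: minus_one_power_iff)

lemma hankelH_mult_even:
  assumes m: "m \<ge> 1" and n: "n = 2*(q+1)"
  shows "hankelH m (m*n) = - ((-1)^(n*m*(m-1) div 2) * tvar^(m*(n-1)*(m*n-2) div 2) * qnum (n-1) (tvar^m))"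
proof -
  obtain s where s: "m = Suc s" using m by (cases m) auto
  have N: "m*n = 2*m*(q+1)" and NM: "m*n - m = m*(2*q+1)" and mN: "m \<le> m*n"
    and Sm: "Suc (m - 1) = m"
    using n m by (simp_all add: algebra_simps)
  have "hankelH m (m*n) = (-1)^(m*(m*(2*q+1)))
      * (qnum (2*q+1) (tvar^m) * ((-1)^(m-1) * tvar^((m choose 2) + (m-1)*(m*q))))
      * tvar^((m*(2*q+1)) choose 2)"
    using hankelH_eq_det_corner_mat[OF m mN] unfolding det_corner_mat_even[OF m N] prod_neg_power NM Sm .
  also have "\<dots> = ((-1)^(m*(m*(2*q+1))) * (-1)^(m-1))
      * tvar^((m choose 2) + (m-1)*(m*q) + ((m*(2*q+1)) choose 2)) * qnum (2*q+1) (tvar^m)"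
    by (simp only: power_add mult_ac)
  also have "(-1)^(m*(m*(2*q+1))) * (-1)^(m-1) = - ((-1)^(n*m*(m-1) div 2) :: rat poly)"
  proof -
    have "n*m*(m-1) = 2 * ((q+1)*(m*(m-1)))" unfolding n by (simp only: mult.assoc)
    then have "n*m*(m-1) div 2 = (q+1)*(m*(m-1))" by simp
    then show ?thesis unfolding s by (simp add: power_add[symmetric])
  qed
  also have "(m choose 2) + (m-1)*(m*q) + ((m*(2*q+1)) choose 2) = m*(n-1)*(m*n-2) div 2"
  proof -
    have "2 * ((m choose 2) + (m-1)*(m*q) + ((m*(2*q+1)) choose 2))
        = m*(m-1) + 2*((m-1)*(m*q)) + (m*(2*q+1))*(m*(2*q+1)-1)"
      by (simp only: distrib_left two_mult_choose_two)
    also have "\<dots> = m*(n-1)*(m*n-2)" unfolding s n by (simp add: algebra_simps)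
    finally show ?thesis by simp
  qed
  finally show ?thesis using n by simp
qed

lemma hankelH_mult_odd:
  assumes m: "m \<ge> 1" and n: "n = 2*q+1" and q: "q \<ge> 1"
  shows "hankelH m (m*n) = - ((-1)^(n*m*(m-1) div 2) * tvar^(m*(n-1)*(m*n-2) div 2) * qnum (n-1) (tvar^m))"
proof -
  obtain s where s: "m = Suc s" using m by (cases m) auto
  obtain p where p: "q = Suc p" using q by (cases q) auto
  have N: "m*n = m*(2*q+1)" and NM: "m*n - m = 2*m*q" and mN: "m \<le> m*n"
    using n by (simp_all add: algebra_simps)
  have "hankelH m (m*n) = (-1)^(m*(2*m*q))
      * ((-1)^(m*(2*q-1)) * qnum (2*q) (tvar^m) * (-1)^((m-1)*(m-2) div 2) * (tvar^(m*q))^(m-1))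
      * tvar^((2*m*q) choose 2)"
    using hankelH_eq_det_corner_mat[OF m mN] unfolding det_corner_mat_odd[OF m N q] NM .
  also have "\<dots> = ((-1)^(m*(2*m*q)) * (-1)^(m*(2*q-1)) * (-1)^((m-1)*(m-2) div 2))
      * tvar^(m*q*(m-1) + ((2*m*q) choose 2)) * qnum (2*q) (tvar^m)"
    by (simp only: power_add power_mult mult_ac)
  also have "(-1)^(m*(2*m*q)) * (-1)^(m*(2*q-1)) * (-1)^((m-1)*(m-2) div 2)
      = - ((-1)^(n*m*(m-1) div 2) :: rat poly)"
  proof -
    have "(m-1)*(m-2) div 2 = s choose 2" unfolding s choose_two by (cases s) simp_all
    moreover have "odd (m*(2*m*q) + m*(2*q-1) + (s choose 2) + n * ((s choose 2) + s))"
      unfolding s p n by simp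
    ultimately show ?thesis
      unfolding mult_choose_two s choose_two_Suc power_add[symmetric]
      by (intro neg_one_power_eq_neg_if_odd_add) (simp add: s)
  qed
  also have "m*q*(m-1) + ((2*m*q) choose 2) = m*(n-1)*(m*n-2) div 2"
  proof -
    have "2 * (m*q*(m-1) + ((2*m*q) choose 2)) = 2*(m*q*(m-1)) + 2*m*q*(2*m*q-1)"
      by (simp only: distrib_left two_mult_choose_two)
    also have "\<dots> = m*(n-1)*(m*n-2)" unfolding s p n by (simp add: algebra_simps)
    finally show ?thesis by simp
  qed
  finally show ?thesis using n by simp
qed

lemma hankelH_mult_even_Suc:
  assumes m: "m \<ge> 1" and n: "n = 2*(q+1)"
  shows "hankelH m (m*n+1) = (-1)^m * (-1)^(n*m*(m-1) div 2) * tvar^(m\<^sup>2*n*(n-1) div 2) * qnum n (tvar^m)"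
proof -
  obtain s where s: "m = Suc s" using m by (cases m) auto
  have N: "m*n+1 = 2*m*(q+1) + 1" and NM: "m*n+1 - m = m*(2*q+1) + 1" and mN: "m \<le> m*n+1"
    and Sm: "Suc (m - 1) = m"
    using n m by (simp_all add: algebra_simps)
  have "hankelH m (m*n+1) = (-1)^(m*(m*(2*q+1) + 1)) * ((-1)^(m-1)
      * ((-1)^(m*(2*q+1)) * qnum (2*q+2) (tvar^m) * ((-1)^(m-1) * tvar^((m choose 2) + (m-1)*(m*q)))))
      * tvar^((m*(2*q+1) + 1) choose 2)"
    using hankelH_eq_det_corner_mat[OF m mN]
    unfolding det_corner_mat_even_Suc[OF m N] prod_neg_power NM Sm .
  also have "\<dots> = ((-1)^(m*(m*(2*q+1) + 1)) * (-1)^(m-1) * (-1)^(m*(2*q+1)) * (-1)^(m-1))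
      * tvar^((m choose 2) + (m-1)*(m*q) + ((m*(2*q+1) + 1) choose 2)) * qnum (2*q+2) (tvar^m)"
    by (simp only: power_add mult_ac)
  also have "(-1)^(m*(m*(2*q+1) + 1)) * (-1)^(m-1) * (-1)^(m*(2*q+1)) * (-1)^(m-1)
      = (-1)^m * ((-1)^(n*m*(m-1) div 2) :: rat poly)"
  proof -
    have "even (m*(m*(2*q+1) + 1) + (m-1) + m*(2*q+1) + (m-1) + (m + n * ((s choose 2) + s)))"
      unfolding s n by simp
    then show ?thesis
      unfolding mult_choose_two s choose_two_Suc power_add[symmetric]
      by (intro neg_one_power_eq_if_even_add) (simp add: s)
  qed
  also have "(m choose 2) + (m-1)*(m*q) + ((m*(2*q+1) + 1) choose 2) = m\<^sup>2*n*(n-1) div 2"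
  proof -
    have "2 * ((m choose 2) + (m-1)*(m*q) + ((m*(2*q+1) + 1) choose 2))
        = m*(m-1) + 2*((m-1)*(m*q)) + (m*(2*q+1) + 1)*(m*(2*q+1) + 1 - 1)"
      by (simp only: distrib_left two_mult_choose_two)
    also have "\<dots> = m\<^sup>2*n*(n-1)" unfolding s n by (simp add: algebra_simps power2_eq_square)
    finally show ?thesis by simp
  qed
  finally show ?thesis using n by simp
qed

lemma hankelH_mult_odd_Suc:
  assumes m: "m \<ge> 1" and n: "n = 2*q+1"
  shows "hankelH m (m*n+1) = (-1)^m * (-1)^(n*m*(m-1) div 2) * tvar^(m\<^sup>2*n*(n-1) div 2) * qnum n (tvar^m)"
proof -
  obtain s where s: "m = Suc s" using m by (cases m) auto
  have N: "m*n+1 = m*(2*q+1) + 1" and NM: "m*n+1 - m = 2*m*q + 1" and mN: "m \<le> m*n+1"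
    using n by (simp_all add: algebra_simps)
  have "hankelH m (m*n+1) = (-1)^(m*(2*m*q + 1)) * ((-1)^(m-1)
      * (qnum (2*q+1) (tvar^m) * (-1)^((m-1)*(m-2) div 2) * (tvar^(m*q))^(m-1)))
      * tvar^((2*m*q + 1) choose 2)"
    using hankelH_eq_det_corner_mat[OF m mN] unfolding det_corner_mat_odd_Suc[OF m N] NM .
  also have "\<dots> = ((-1)^(m*(2*m*q + 1)) * (-1)^(m-1) * (-1)^((m-1)*(m-2) div 2))
      * tvar^(m*q*(m-1) + ((2*m*q + 1) choose 2)) * qnum (2*q+1) (tvar^m)"
    by (simp only: power_add power_mult mult_ac)
  also have "(-1)^(m*(2*m*q + 1)) * (-1)^(m-1) * (-1)^((m-1)*(m-2) div 2)
      = (-1)^m * ((-1)^(n*m*(m-1) div 2) :: rat poly)"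
  proof -
    have "(m-1)*(m-2) div 2 = s choose 2" unfolding s choose_two by (cases s) simp_all
    moreover have "even (m*(2*m*q + 1) + (m-1) + (s choose 2) + (m + n * ((s choose 2) + s)))"
      unfolding s n by simp
    ultimately show ?thesis
      unfolding mult_choose_two s choose_two_Suc power_add[symmetric]
      by (intro neg_one_power_eq_if_even_add) (simp add: s)
  qed
  also have "m*q*(m-1) + ((2*m*q + 1) choose 2) = m\<^sup>2*n*(n-1) div 2"
  proof -
    have "2 * (m*q*(m-1) + ((2*m*q + 1) choose 2)) = 2*(m*q*(m-1)) + (2*m*q + 1)*(2*m*q + 1 - 1)"
      by (simp only: distrib_left two_mult_choose_two)
    also have "\<dots> = m\<^sup>2*n*(n-1)" unfolding s n by (simp add: algebra_simps power2_eq_square)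
    finally show ?thesis by simp
  qed
  finally show ?thesis using n by simp
qed

lemma hankelH_mult:
  assumes m: "m \<ge> 1" and n: "n \<ge> 1"
  shows "hankelH m (m*n) = - ((-1)^(n*m*(m-1) div 2) * tvar^(m*(n-1)*(m*n-2) div 2) * qnum (n-1) (tvar^m))"
proof -
  have "n = 1 \<or> (\<exists>q. n = 2*(q+1)) \<or> (\<exists>q. n = 2*q+1 \<and> q \<ge> 1)"
    using n by presburger
  then consider "n = 1" | q where "n = 2*(q+1)" | q where "n = 2*q+1" "q \<ge> 1"
    by blast
  then show ?thesis
  proof cases
    case 1
    then show ?thesis using hankelH_eq_0_small[OF m, of m] m by (simp add: qnum_def)
  qed (use hankelH_mult_even[OF m] hankelH_mult_odd[OF m] in blast)+
qed

lemma hankelH_mult_Suc: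
  assumes m: "m \<ge> 1"
  shows "hankelH m (m*n+1) = (-1)^m * (-1)^(n*m*(m-1) div 2) * tvar^(m\<^sup>2*n*(n-1) div 2) * qnum n (tvar^m)"
proof -
  have "n = 0 \<or> (\<exists>q. n = 2*(q+1)) \<or> (\<exists>q. n = 2*q+1)"
    by presburger
  then consider "n = 0" | q where "n = 2*(q+1)" | q where "n = 2*q+1"
    by blast
  then show ?thesis
  proof cases
    case 1
    then show ?thesis using hankelH_eq_0_small[OF m, of 1] m by (simp add: qnum_def)
  qed (use hankelH_mult_even_Suc[OF m] hankelH_mult_odd_Suc[OF m] in blast)+
qed

lemma hankelH_eq_0:
  assumes m: "m \<ge> 1" and N: "N \<noteq> 0" "\<forall>n\<ge>1. N \<noteq> m * n" "\<forall>n. N \<noteq> m * n + 1"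
  shows "hankelH m N = 0"
proof (cases "N \<le> m")
  case True
  then show ?thesis using hankelH_eq_0_small[OF m, of N] N(1) by simp
next
  case False
  have div: "N = m * (N div m) + N mod m" and "N div m \<ge> 1"
    using False m by (simp_all add: Suc_le_eq div_greater_zero_iff)
  then have "N mod m \<noteq> 0" "N mod m \<noteq> 1" using N(2,3) by (metis add.right_neutral)+
  then have "det (corner_mat m N) = 0"
    using m div \<open>N div m \<ge> 1\<close> by (intro det_corner_mat_eq_0[OF m div]) simp_all
  then show ?thesis using hankelH_eq_det_corner_mat[OF m] False by simp
qed

theorem theorem1p4:
  fixes m :: nat
  assumes "m \<ge> 1"
  shows "hankelH m 0 = 1
    \<and> (\<forall>n\<ge>1. hankelH m (m * n) =
           - ((-1) ^ (n * m * (m - 1) div 2) * tvar ^ (m * (n - 1) * (m * n - 2) div 2)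
              * qnum (n - 1) (tvar ^ m)))
    \<and> (\<forall>n. hankelH m (m * n + 1) =
           (-1) ^ m * (-1) ^ (n * m * (m - 1) div 2) * tvar ^ (m\<^sup>2 * n * (n - 1) div 2)
              * qnum n (tvar ^ m))
    \<and> (\<forall>N. N \<noteq> 0 \<and> (\<forall>n\<ge>1. N \<noteq> m * n) \<and> (\<forall>n. N \<noteq> m * n + 1)
           \<longrightarrow> hankelH m N = 0)"
proof (intro conjI allI impI)
  show "hankelH m 0 = 1"
    unfolding hankelH_def by (subst det_dim_zero) auto
qed (use hankelH_mult[OF assms] hankelH_mult_Suc[OF assms] hankelH_eq_0[OF assms] in auto)

end
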